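(* Let $\alpha,\beta>0$ with $0<\alpha+\beta<n$, $1<p<n/(\alpha+\beta)$, $1/s=1/p-(\alpha+\beta)/n$, and let $w$ be a weight with $w^s\in A_1$. Then for every $0<\kappa<p/s$ and $1<r<p$ there is $C$ such that $$\|M_{\alpha+\beta,r}f\|_{L^{s,\kappa s/p}(w^s)}\le C\|f\|_{L^{p,\kappa}(w^p,w^s)}.$$
   Context: All cubes have sides parallel to the axes. A weight is a locally integrable function positive a.e.; $u(Q)=\int_Q u$ (so $w^s(Q)=\int_Q w^s$). $w\in A_1$ means $\frac1{|Q|}\int_Q w\le C\,\mathrm{ess\,inf}_Q w$ for all cubes $Q$. For $0<\gamma<n$, $r\ge1$: $M_{\gamma,r}f(x)=\sup_{Q\ni x}\big(\frac{1}{|Q|^{1-\gamma r/n}}\int_Q|f(y)|^r\,dy\big)^{1/r}$. For $1\le p<\infty$, $0<\kappa<1$ and weights $u,v$, $\|f\|_{L^{p,\kappa}(u,v)}=\sup_Q\big(\frac1{v(Q)^\kappa}\int_Q|f|^pu\big)^{1/p}$, and $L^{p,\kappa}(w)=L^{p,\kappa}(w,w)$. *)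

theory Defs
  imports "HOL-Analysis.Analysis"
begin

text \<open>Cubes with sides parallel to the axes (closed; boundaries are null sets).\<close>
definition is_cube :: "'a::euclidean_space set \<Rightarrow> bool" where
  "is_cube Q \<longleftrightarrow> (\<exists>a h. h > 0 \<and> Q = cbox a (a + h *\<^sub>R One))"

definition epow :: "ennreal \<Rightarrow> real \<Rightarrow> ennreal" where
  "epow X t = (if X = \<infinity> then \<infinity> else ennreal (enn2real X powr t))"

definition wmeas :: "('a::euclidean_space \<Rightarrow> real) \<Rightarrow> 'a set \<Rightarrow> ennreal" where
  "wmeas u Q = (\<integral>\<^sup>+ x. ennreal (u x) * indicator Q x \<partial>lebesgue)"

definition weight :: "('a::euclidean_space \<Rightarrow> real) \<Rightarrow> bool" where
  "weight w \<longleftrightarrow> w \<in> borel_measurable lebesgue \<and>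
     (\<forall>K. compact K \<longrightarrow> set_integrable lebesgue K w) \<and>
     (AE x in lebesgue. w x > 0)"

text \<open>Muckenhoupt A_1: average over Q bounded by C times the essential infimum over Q.\<close>
definition A1 :: "('a::euclidean_space \<Rightarrow> real) \<Rightarrow> bool" where
  "A1 w \<longleftrightarrow> weight w \<and> (\<exists>C::real. \<forall>Q. is_cube Q \<longrightarrow>
     (AE x in lebesgue. x \<in> Q \<longrightarrow>
        wmeas w Q / ennreal (measure lebesgue Q) \<le> ennreal C * ennreal (w x)))"

definition frac_max :: "real \<Rightarrow> real \<Rightarrow> ('a::euclidean_space \<Rightarrow> real) \<Rightarrow> 'a \<Rightarrow> ennreal" where
  "frac_max \<gamma> r f x = (SUP Q\<in>{Q. is_cube Q \<and> x \<in> Q}.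
     epow (ennreal (measure lebesgue Q powr (\<gamma> * r / real DIM('a) - 1)) *
           (\<integral>\<^sup>+ y. ennreal (\<bar>f y\<bar> powr r) * indicator Q y \<partial>lebesgue)) (1 / r))"

definition morrey_norm :: "real \<Rightarrow> real \<Rightarrow> ('a::euclidean_space \<Rightarrow> real) \<Rightarrow> ('a \<Rightarrow> real)
    \<Rightarrow> ('a \<Rightarrow> ennreal) \<Rightarrow> ennreal" where
  "morrey_norm p \<kappa> u v g = (SUP Q\<in>{Q. is_cube Q}.
     epow ((\<integral>\<^sup>+ y. epow (g y) p * ennreal (u y) * indicator Q y \<partial>lebesgue) / epow (wmeas v Q) \<kappa>) (1 / p))"

end

theory Submission
  imports Defs
begin

(* Write W = w^s, mu(P) = W(P), nu(P) = integral of |f|^p w^p over P, and lam = p/s < 1.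
   A finite Morrey norm R0 of f means nu(P) <= N mu(P)^kappa for all cubes P, with N = R0^p.
   (1) cube_est: on a cube P the M_{gamma,r}-average of f is at most
       (C1 nu(P)^(1/lam) / mu(P))^(1/s), by Hoelder and the A_1 lower bound
       w^s >= mu(P) / (C1 |P|) on P; the powers of |P| cancel by the exponent relation.
   (2) frac_bound: for x in a cube Q, the cubes P containing x that are larger than Q are
       controlled by the Morrey condition alone; the smaller ones lie in the fivefold cube
       cube5 of Q and are controlled by a localised maximal function F of nu with respect
       to mu, interpolated against the Morrey condition.  Thus
       M f(x)^s <= A F(x)^kexp + B(mu(Q)) with 0 < kexp < 1.
   (3) local_max_integral: F is of weak type (1,1) with respect to mu (Vitali covering and
       doubling of A_1 weights), so Kolmogorov's inequality bounds the mu-integral of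
       F^kexp over Q.
   (4) cube_integral, main_estimate: integrating (2) over Q gives a bound
       C N^(1/lam) mu(Q)^(kappa/lam), which is the Morrey estimate. *)

lemma less_div_ennreal:
  assumes "ennreal t < X / ennreal m" "m > 0" "t \<ge> 0"
  shows "ennreal t * ennreal m < X"
proof (cases X)
  case (real v)
  then have "t < v / m" using assms by (simp add: divide_ennreal ennreal_less_iff)
  then have "t * m < v" using assms by (simp add: field_simps)
  then show ?thesis using real assms by (simp add: ennreal_mult[symmetric] ennreal_less_iff)
qed (simp add: ennreal_mult_less_top)


lemma epow_ennreal: "x \<ge> 0 \<Longrightarrow> epow (ennreal x) t = ennreal (x powr t)"
  by (simp add: epow_def)

lemma epow_mono: "X \<le> Y \<Longrightarrow> t > 0 \<Longrightarrow> epow X t \<le> epow Y t"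
  by (cases X; cases Y) (auto simp: epow_def top_unique intro!: ennreal_leI powr_mono2)

lemma epow_epow: "t > 0 \<Longrightarrow> epow (epow X (1 / t)) t = X"
  by (cases X) (auto simp: epow_def powr_powr)

lemma epow_epow_inv: "t > 0 \<Longrightarrow> epow (epow X t) (1 / t) = X"
  by (cases X) (auto simp: epow_def powr_powr)

lemma measurable_epow[measurable]:
  assumes [measurable]: "F \<in> borel_measurable M"
  shows "(\<lambda>x. epow (F x) t) \<in> borel_measurable M"
  unfolding epow_def by measurable

section \<open>Kolmogorov's inequality\<close>

text \<open>A weak-type bound on a set A of finite measure controls the integral of the
  power F^e over A for 0 < e < 1.  The constant is obtained by dyadic layers.\<close>

definition kolmogorov_const :: "real \<Rightarrow> real" where
  "kolmogorov_const e = 1 + 2 powr e / (1 - 2 powr (e - 1))"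

lemma kolmogorov_const_nonneg:
  assumes "0 < e" "e < 1" shows "kolmogorov_const e \<ge> 0"
proof -
  have "2 powr (e - 1) < (1::real)" using assms by (intro powr_less_one) auto
  then show ?thesis unfolding kolmogorov_const_def by simp
qed

lemma dyadic_layer_exists:
  fixes y t0 :: real
  assumes t0: "t0 > 0" and y: "t0 < y"
  obtains k :: nat where "t0 * 2 ^ k < y" "y \<le> t0 * 2 ^ Suc k"
proof -
  have ex: "\<exists>k. y \<le> t0 * 2 ^ Suc k"
  proof -
    obtain k where "y / t0 < 2 ^ k" using real_arch_pow[of 2 "y / t0"] by auto
    then have "y < t0 * 2 ^ k" using t0 by (simp add: field_simps)
    moreover have "t0 * 2 ^ k \<le> t0 * 2 ^ Suc k" using t0 by simp
    ultimately have "y \<le> t0 * 2 ^ Suc k" by linarith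
    then show ?thesis by blast
  qed
  define k where "k = (LEAST k. y \<le> t0 * 2 ^ Suc k)"
  have "y \<le> t0 * 2 ^ Suc k" unfolding k_def by (rule LeastI_ex[OF ex])
  moreover have "t0 * 2 ^ k < y"
  proof (cases k)
    case (Suc j)
    then have "\<not> y \<le> t0 * 2 ^ Suc j"
      using not_less_Least[of j "\<lambda>k. y \<le> t0 * 2 ^ Suc k"] k_def by auto
    then show ?thesis using Suc by simp
  qed (use y in simp)
  ultimately show ?thesis using that by blast
qed

lemma dyadic_majorant:
  fixes y t0 e :: real
  assumes "y \<ge> 0" "t0 > 0" "e > 0"
  shows "ennreal (y powr e) \<le> ennreal (t0 powr e) +
     (\<Sum>k. ennreal ((t0 * 2 ^ Suc k) powr e) * indicator {z. t0 * 2 ^ k < z} y)"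
proof (cases "y \<le> t0")
  case True
  then have "ennreal (y powr e) \<le> ennreal (t0 powr e)"
    using assms by (intro ennreal_leI powr_mono2) auto
  then show ?thesis by (rule order_trans) simp
next
  case False
  then have "t0 < y" by simp
  then obtain k where k: "t0 * 2 ^ k < y" "y \<le> t0 * 2 ^ Suc k"
    by (rule dyadic_layer_exists[OF assms(2)])
  let ?f = "\<lambda>k. ennreal ((t0 * 2 ^ Suc k) powr e) * indicator {z. t0 * 2 ^ k < z} y"
  have "ennreal (y powr e) \<le> ennreal ((t0 * 2 ^ Suc k) powr e)"
    using assms k by (intro ennreal_leI powr_mono2) auto
  also have "\<dots> = sum ?f {k}" using k by simp
  also have "\<dots> \<le> (\<Sum>k. ?f k)" by (rule sum_le_suminf) auto
  also have "\<dots> \<le> ennreal (t0 powr e) + (\<Sum>k. ?f k)" by simp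
  finally show ?thesis .
qed

lemma dyadic_layer_bound:
  fixes M :: "'b measure" and F :: "'b \<Rightarrow> ennreal"
  assumes F[measurable]: "F \<in> borel_measurable M" and A[measurable]: "A \<in> sets M"
    and t0: "t0 > 0" and e: "e > 0"
    and finite: "AE x in M. x \<in> A \<longrightarrow> F x \<noteq> \<infinity>"
  shows "(\<integral>\<^sup>+x. epow (F x) e * indicator A x \<partial>M) \<le> ennreal (t0 powr e) * emeasure M A
     + (\<Sum>k. ennreal ((t0 * 2 ^ Suc k) powr e) * emeasure M ({x\<in>space M. ennreal (t0 * 2 ^ k) < F x} \<inter> A))"
proof -
  define S where "S = (\<lambda>k::nat. {x\<in>space M. ennreal (t0 * 2 ^ k) < F x})"
  have S[measurable]: "S k \<in> sets M" for k unfolding S_def by measurable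
  have "AE x in M. epow (F x) e * indicator A x \<le> ennreal (t0 powr e) * indicator A x
      + (\<Sum>k. ennreal ((t0 * 2 ^ Suc k) powr e) * indicator (S k \<inter> A) x)"
    using finite
  proof (rule AE_mp, intro AE_I2 impI)
    fix x assume x: "x \<in> space M" and fin: "x \<in> A \<longrightarrow> F x \<noteq> \<infinity>"
    show "epow (F x) e * indicator A x \<le> ennreal (t0 powr e) * indicator A x
      + (\<Sum>k. ennreal ((t0 * 2 ^ Suc k) powr e) * indicator (S k \<inter> A) x)"
    proof (cases "x \<in> A")
      case True
      then obtain y where y: "F x = ennreal y" "y \<ge> 0" using fin by (cases "F x") auto
      have "indicator {z. t0 * 2 ^ k < z} y = (indicator (S k \<inter> A) x :: ennreal)" for k
        using True x y t0 by (auto simp: S_def ennreal_less_iff split: split_indicator)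
      then show ?thesis using dyadic_majorant[OF y(2) t0 e] True y by (simp add: epow_ennreal)
    qed simp
  qed
  then have "(\<integral>\<^sup>+x. epow (F x) e * indicator A x \<partial>M) \<le> (\<integral>\<^sup>+x. ennreal (t0 powr e) * indicator A x
      + (\<Sum>k. ennreal ((t0 * 2 ^ Suc k) powr e) * indicator (S k \<inter> A) x) \<partial>M)"
    by (rule nn_integral_mono_AE)
  then show ?thesis
    by (simp add: S_def nn_integral_add nn_integral_suminf nn_integral_cmult_indicator)
qed

lemma weak_bound_null:
  assumes S: "S \<in> sets M" and B: "B \<ge> 0" and bound: "\<And>t. t > 0 \<Longrightarrow> emeasure M S \<le> ennreal (B / t)"
  shows "emeasure M S = 0"
proof -
  have "emeasure M S \<le> 0"
  proof (rule ennreal_le_epsilon)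
    fix d :: real assume d: "0 < d"
    have "emeasure M S \<le> ennreal (B / ((B + 1) / d))" using bound[of "(B + 1) / d"] d B by simp
    also have "\<dots> \<le> ennreal d" using d B by (intro ennreal_leI) (simp add: field_simps)
    finally show "emeasure M S \<le> 0 + ennreal d" by simp
  qed
  then show ?thesis by simp
qed

lemma weak_bound_AE_finite:
  fixes F :: "'b \<Rightarrow> ennreal"
  assumes F[measurable]: "F \<in> borel_measurable M" and A[measurable]: "A \<in> sets M" and B: "B \<ge> 0"
    and weak: "\<And>t. t > 0 \<Longrightarrow> emeasure M ({x\<in>space M. ennreal t < F x} \<inter> A) \<le> ennreal (B / t)"
  shows "AE x in M. x \<in> A \<longrightarrow> F x \<noteq> \<infinity>"
proof -
  have "emeasure M ({x\<in>space M. F x = \<infinity>} \<inter> A) = 0"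
  proof (rule weak_bound_null[OF _ B])
    fix t :: real assume "t > 0"
    then show "emeasure M ({x\<in>space M. F x = \<infinity>} \<inter> A) \<le> ennreal (B / t)"
      using weak[of t] by (rule_tac order_trans[rotated]) (auto intro!: emeasure_mono)
  qed simp
  then show ?thesis
    by (subst AE_iff_measurable[where N="{x\<in>space M. F x = \<infinity>} \<inter> A"]) auto
qed

lemma dyadic_term_identity:
  fixes t0 B e :: real and k :: nat
  assumes "t0 > 0"
  shows "(t0 * 2 ^ Suc k) powr e * (B / (t0 * 2 ^ k)) = 2 powr e * B * t0 powr (e - 1) * (2 powr (e - 1)) ^ k"
proof -
  have a: "(t0 * 2 ^ Suc k) powr e = t0 powr e * 2 powr e * (2 powr e) ^ k"
    using assms by (simp add: powr_mult powr_realpow[symmetric] powr_powr mult_ac flip: powr_realpow)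
  have b: "(2 powr (e - 1)) ^ k = (2 powr e) ^ k / 2 ^ k"
    by (simp add: powr_diff power_divide)
  have c: "t0 powr (e - 1) = t0 powr e / t0" using assms by (simp add: powr_diff)
  show ?thesis unfolding a b c using assms by (simp add: field_simps)
qed

text \<open>Kolmogorov's inequality with a free splitting height t0 > 0: below t0 bound F^e by t0^e,
  above t0 sum the geometric series of layer contributions.\<close>
lemma kolmogorov_split:
  fixes M :: "'b measure" and F :: "'b \<Rightarrow> ennreal"
  assumes F[measurable]: "F \<in> borel_measurable M" and A[measurable]: "A \<in> sets M"
    and e: "0 < e" "e < 1" and t0: "t0 > 0"
    and mA: "emeasure M A = ennreal m" and m: "m \<ge> 0" and B: "B \<ge> 0"
    and weak: "\<And>t. t > 0 \<Longrightarrow> emeasure M ({x\<in>space M. ennreal t < F x} \<inter> A) \<le> ennreal (B / t)"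
  shows "(\<integral>\<^sup>+x. epow (F x) e * indicator A x \<partial>M)
     \<le> ennreal (t0 powr e * m + 2 powr e / (1 - 2 powr (e - 1)) * B * t0 powr (e - 1))"
proof -
  define q :: real where "q = 2 powr (e - 1)"
  have q: "0 \<le> q" "q < 1" using e by (auto simp: q_def powr_less_one)
  have finite: "AE x in M. x \<in> A \<longrightarrow> F x \<noteq> \<infinity>" by (rule weak_bound_AE_finite[OF F A B weak])
  define c where "c = (\<lambda>k::nat. 2 powr e * B * t0 powr (e - 1) * q ^ k)"
  have layer: "ennreal ((t0 * 2 ^ Suc k) powr e) * emeasure M ({x\<in>space M. ennreal (t0 * 2 ^ k) < F x} \<inter> A)
      \<le> ennreal (c k)" for k
  proof -
    have "ennreal ((t0 * 2 ^ Suc k) powr e) * emeasure M ({x\<in>space M. ennreal (t0 * 2 ^ k) < F x} \<inter> A)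
        \<le> ennreal ((t0 * 2 ^ Suc k) powr e) * ennreal (B / (t0 * 2 ^ k))"
      using weak[of "t0 * 2 ^ k"] t0 by (intro mult_left_mono) auto
    also have "\<dots> = ennreal ((t0 * 2 ^ Suc k) powr e * (B / (t0 * 2 ^ k)))"
      using t0 B by (subst ennreal_mult) auto
    also have "\<dots> = ennreal (c k)" unfolding dyadic_term_identity[OF t0] c_def q_def ..
    finally show ?thesis .
  qed
  have "summable c" using q unfolding c_def by (intro summable_mult summable_geometric) simp
  moreover have "(\<Sum>k. c k) = 2 powr e / (1 - 2 powr (e - 1)) * B * t0 powr (e - 1)"
    using q unfolding c_def by (subst suminf_mult) (simp_all add: suminf_geometric q_def)
  ultimately have sum_c: "(\<Sum>k. ennreal (c k)) = ennreal (2 powr e / (1 - 2 powr (e - 1)) * B * t0 powr (e - 1))"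
    using B t0 by (subst suminf_ennreal2) (auto simp: c_def q_def)
  have "(\<integral>\<^sup>+x. epow (F x) e * indicator A x \<partial>M) \<le> ennreal (t0 powr e) * ennreal m + (\<Sum>k. ennreal (c k))"
  proof (rule order_trans[OF dyadic_layer_bound[OF F A t0 e(1) finite]])
    show "ennreal (t0 powr e) * emeasure M A + (\<Sum>k. ennreal ((t0 * 2 ^ Suc k) powr e) *
        emeasure M ({x \<in> space M. ennreal (t0 * 2 ^ k) < F x} \<inter> A))
      \<le> ennreal (t0 powr e) * ennreal m + (\<Sum>k. ennreal (c k))"
      using mA by (intro add_mono suminf_le layer) auto
  qed
  also have "\<dots> = ennreal (t0 powr e * m + 2 powr e / (1 - 2 powr (e - 1)) * B * t0 powr (e - 1))"
    using m B q by (simp add: sum_c ennreal_mult[symmetric] ennreal_plus[symmetric] q_def del: ennreal_plus)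
  finally show ?thesis .
qed

text \<open>Kolmogorov's inequality: the optimal height is t0 = B / m; degenerate cases
  (a null set A, or B = 0) are handled separately.\<close>
lemma kolmogorov:
  fixes M :: "'b measure" and F :: "'b \<Rightarrow> ennreal"
  assumes F[measurable]: "F \<in> borel_measurable M" and A[measurable]: "A \<in> sets M"
    and e: "0 < e" "e < 1"
    and mA: "emeasure M A = ennreal m" and m: "m \<ge> 0" and B: "B \<ge> 0"
    and weak: "\<And>t. t > 0 \<Longrightarrow> emeasure M ({x\<in>space M. ennreal t < F x} \<inter> A) \<le> ennreal (B / t)"
  shows "(\<integral>\<^sup>+x. epow (F x) e * indicator A x \<partial>M) \<le> ennreal (kolmogorov_const e * B powr e * m powr (1 - e))"
proof -
  note split = kolmogorov_split[OF F A e _ mA m B weak]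
  consider "m = 0" | "B = 0" "m > 0" | "m > 0" "B > 0" using m B by linarith
  then show ?thesis
  proof cases
    case 1
    have "(\<integral>\<^sup>+x. epow (F x) e * indicator A x \<partial>M) \<le> (\<integral>\<^sup>+x. \<infinity> * indicator A x \<partial>M)"
      by (intro nn_integral_mono) (simp split: split_indicator)
    also have "\<dots> = 0" using mA 1 by (simp add: nn_integral_cmult_indicator)
    finally show ?thesis by simp
  next
    case 2
    have "(\<integral>\<^sup>+x. epow (F x) e * indicator A x \<partial>M) \<le> 0"
    proof (rule ennreal_le_epsilon)
      fix d :: real assume d: "0 < d"
      define t0 where "t0 = (d / m) powr (1 / e)"
      have "t0 > 0" using d 2 by (simp add: t0_def)
      moreover have "t0 powr e * m = d" using d 2 e by (simp add: t0_def powr_powr)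
      ultimately show "(\<integral>\<^sup>+x. epow (F x) e * indicator A x \<partial>M) \<le> 0 + ennreal d"
        using split[of t0] 2 by simp
    qed
    then show ?thesis by simp
  next
    case 3
    define c where "c = 2 powr e / (1 - 2 powr (e - 1))"
    have t0: "B / m > 0" using 3 by simp
    have "(B / m) powr e * m = B powr e * m powr (1 - e)"
      using 3 by (simp add: powr_divide powr_diff field_simps)
    moreover have "B * (B / m) powr (e - 1) = B powr e * m powr (1 - e)"
      using 3 by (simp add: powr_divide powr_diff field_simps)
    ultimately have "(B / m) powr e * m + c * B * (B / m) powr (e - 1) = kolmogorov_const e * B powr e * m powr (1 - e)"
      by (simp add: kolmogorov_const_def c_def algebra_simps)
    then show ?thesis using split[OF t0] by (simp add: c_def)
  qed
qed

section \<open>A Hoelder-type power mean inequality\<close>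

text \<open>Concavity of z^th for 0 < th < 1, as the tangent-line bound at z = 1.\<close>
lemma concave_powr_le:
  fixes z th :: real
  assumes "z \<ge> 0" "0 < th" "th < 1"
  shows "z powr th \<le> th * z + (1 - th)"
proof (cases "z = 0")
  case False
  then have "z powr th * 1 powr (1 - th) \<le> th * z + (1 - th) * 1"
    using assms by (intro Youngs_inequality_0) auto
  then show ?thesis by simp
qed (use assms in auto)

lemma young_scaled:
  fixes g T r p :: real
  assumes g: "g \<ge> 0" and T: "T > 0" and rp: "0 < r" "r < p"
  shows "g powr r \<le> T powr (r / p) * (r / p) / T * g powr p + T powr (r / p) * (1 - r / p)"
proof -
  have th: "0 < r / p" "r / p < 1" using rp by auto
  have "g powr r = T powr (r / p) * (g powr p / T) powr (r / p)"
    using T g rp by (simp add: powr_divide powr_powr)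
  also have "\<dots> \<le> T powr (r / p) * ((r / p) * (g powr p / T) + (1 - r / p))"
    using T th by (intro mult_left_mono concave_powr_le) auto
  also have "\<dots> = T powr (r / p) * (r / p) / T * g powr p + T powr (r / p) * (1 - r / p)"
    using T by (simp add: field_simps)
  finally show ?thesis .
qed

lemma young_integral:
  fixes M :: "'b measure" and g :: "'b \<Rightarrow> real"
  assumes g[measurable]: "g \<in> borel_measurable M" and gnn: "\<And>x. g x \<ge> 0"
    and A[measurable]: "A \<in> sets M" and mA: "emeasure M A = ennreal L"
    and T: "T > 0" and rp: "0 < r" "r < p"
  shows "(\<integral>\<^sup>+x. ennreal (g x powr r) * indicator A x \<partial>M)
    \<le> ennreal (T powr (r / p) * (r / p) / T) * (\<integral>\<^sup>+x. ennreal (g x powr p) * indicator A x \<partial>M)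
      + ennreal (T powr (r / p) * (1 - r / p)) * ennreal L"
proof -
  define a where "a = T powr (r / p) * (r / p) / T"
  define b where "b = T powr (r / p) * (1 - r / p)"
  have ab: "a \<ge> 0" "b \<ge> 0" using T rp by (auto simp: a_def b_def)
  have "ennreal (g x powr r) * indicator A x
      \<le> ennreal a * (ennreal (g x powr p) * indicator A x) + ennreal b * indicator A x" for x
  proof -
    have "ennreal (g x powr r) \<le> ennreal (a * g x powr p + b)"
      using young_scaled[OF gnn T rp] by (intro ennreal_leI) (simp add: a_def b_def)
    also have "\<dots> = ennreal a * ennreal (g x powr p) + ennreal b"
      using ab by (simp only: ennreal_plus[symmetric] ennreal_mult[symmetric] powr_ge_zero mult_nonneg_nonneg)
    finally show ?thesis by (simp split: split_indicator)
  qed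
  then have "(\<integral>\<^sup>+x. ennreal (g x powr r) * indicator A x \<partial>M)
      \<le> (\<integral>\<^sup>+x. ennreal a * (ennreal (g x powr p) * indicator A x) + ennreal b * indicator A x \<partial>M)"
    by (rule nn_integral_mono)
  then show ?thesis by (simp add: nn_integral_add nn_integral_cmult mA a_def b_def)
qed

text \<open>Hoelder's inequality on a set of finite positive measure L:
  integral of g^r over A <= L^(1 - r/p) (integral of g^p over A)^(r/p) for 0 < r < p.
  Apply the Young bound with the optimal scale T = (integral of g^p) / L.\<close>
lemma power_mean_nn:
  fixes M :: "'b measure" and g :: "'b \<Rightarrow> real"
  assumes g[measurable]: "g \<in> borel_measurable M" and gnn: "\<And>x. g x \<ge> 0"
    and A[measurable]: "A \<in> sets M" and mA: "emeasure M A = ennreal L" and L: "L > 0"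
    and rp: "0 < r" "r < p"
  shows "(\<integral>\<^sup>+x. ennreal (g x powr r) * indicator A x \<partial>M)
     \<le> ennreal (L powr (1 - r / p)) * epow (\<integral>\<^sup>+x. ennreal (g x powr p) * indicator A x \<partial>M) (r / p)"
proof -
  define th where "th = r / p"
  have th: "0 < th" "th < 1" using rp by (auto simp: th_def)
  define I where "I = (\<integral>\<^sup>+x. ennreal (g x powr p) * indicator A x \<partial>M)"
  consider "I = \<infinity>" | "I = 0" | J where "I = ennreal J" "J > 0"
    by (cases I) (force simp: top_unique)+
  then show ?thesis
  proof cases
    case 1
    then show ?thesis using L by (simp add: I_def[symmetric] th_def[symmetric] ennreal_mult_top epow_def)
  next
    case 2
    then have "AE x in M. ennreal (g x powr p) * indicator A x = 0"
      unfolding I_def by (subst (asm) nn_integral_0_iff_AE) auto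
    then have "AE x in M. ennreal (g x powr r) * indicator A x = 0"
      by (rule AE_mp, intro AE_I2) (auto split: split_indicator)
    then have "(\<integral>\<^sup>+x. ennreal (g x powr r) * indicator A x \<partial>M) = 0"
      by (subst nn_integral_0_iff_AE) auto
    then show ?thesis by simp
  next
    case 3
    define T where "T = J / L"
    have T: "T > 0" using 3 L by (simp add: T_def)
    have "(\<integral>\<^sup>+x. ennreal (g x powr r) * indicator A x \<partial>M)
        \<le> ennreal (T powr th * th / T) * I + ennreal (T powr th * (1 - th)) * ennreal L"
      using young_integral[OF g gnn A mA T rp] by (simp add: I_def th_def)
    also have "\<dots> = ennreal (T powr th * L)"
      using 3 T th L by (simp add: ennreal_mult[symmetric] ennreal_plus[symmetric] T_def field_simps)
    also have "T powr th * L = L powr (1 - th) * J powr th"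
      using 3 L by (simp add: T_def powr_divide powr_diff field_simps)
    finally show ?thesis
      using 3 by (simp add: I_def[symmetric] th_def[symmetric] epow_ennreal ennreal_mult)
  qed
qed

section \<open>Cubes\<close>

definition cube :: "'a::euclidean_space \<Rightarrow> real \<Rightarrow> 'a set" where
  "cube a h = cbox a (a + h *\<^sub>R One)"

lemma is_cube_iff: "is_cube Q \<longleftrightarrow> (\<exists>a h. h > 0 \<and> Q = cube a h)"
  by (simp add: is_cube_def cube_def)

lemma mem_cube: "x \<in> cube a h \<longleftrightarrow> (\<forall>i\<in>Basis. a \<bullet> i \<le> x \<bullet> i \<and> x \<bullet> i \<le> a \<bullet> i + h)"
  by (auto simp: cube_def mem_box inner_simps)

lemma measure_cube: "h \<ge> 0 \<Longrightarrow> measure lebesgue (cube (a::'a::euclidean_space) h) = h ^ DIM('a)"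
  unfolding cube_def by (subst measure_completion, simp) (subst content_cbox, auto simp: inner_simps)

lemma emeasure_cube: "h \<ge> 0 \<Longrightarrow> emeasure lebesgue (cube (a::'a::euclidean_space) h) = ennreal (h ^ DIM('a))"
  unfolding cube_def by (subst emeasure_completion) (auto simp: emeasure_lborel_cbox_eq inner_simps)

lemma cube_sets[measurable]: "cube a h \<in> sets lebesgue"
  unfolding cube_def by simp

lemma compact_cube: "compact (cube a h)"
  unfolding cube_def by simp

lemma side_le:
  fixes b c :: "'a::euclidean_space"
  assumes k: "k > 0" and sub: "cube b k \<subseteq> cube c l"
  shows "k \<le> l"
proof -
  obtain i :: 'a where i: "i \<in> Basis" using nonempty_Basis by blast
  have "b \<in> cube b k" "b + k *\<^sub>R One \<in> cube b k" using k unfolding mem_cube by (auto simp: inner_simps)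
  then have "b \<in> cube c l" "b + k *\<^sub>R One \<in> cube c l" using sub by auto
  then have "c \<bullet> i \<le> b \<bullet> i" "b \<bullet> i + k \<le> c \<bullet> i + l" using i unfolding mem_cube by (auto simp: inner_simps)
  then show ?thesis by simp
qed

lemma cube_sub3: "0 \<le> k \<Longrightarrow> cube b k \<subseteq> cube (b - k *\<^sub>R One) (3 * k)"
  unfolding mem_cube subset_iff by (auto simp: inner_simps)

lemma cube_tail:
  assumes "x \<in> cube a h" "x \<in> cube b k" "h < k"
  shows "cube a h \<subseteq> cube (b - k *\<^sub>R One) (3 * k)"
  unfolding subset_iff mem_cube
proof (intro allI impI ballI)
  fix t i :: 'a assume H: "\<forall>i\<in>Basis. a \<bullet> i \<le> t \<bullet> i \<and> t \<bullet> i \<le> a \<bullet> i + h" and i: "i \<in> Basis"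
  show "(b - k *\<^sub>R One) \<bullet> i \<le> t \<bullet> i \<and> t \<bullet> i \<le> (b - k *\<^sub>R One) \<bullet> i + 3 * k"
    using H[rule_format, OF i] assms(1,2)[unfolded mem_cube, rule_format, OF i] assms(3) i by (simp add: inner_simps)
qed

definition cube5 :: "'a::euclidean_space \<Rightarrow> real \<Rightarrow> 'a set" where
  "cube5 a h = cube (a - (2 * h) *\<^sub>R One) (5 * h)"

lemma cube_sub_cube5: "h > 0 \<Longrightarrow> cube a h \<subseteq> cube5 a h"
  unfolding cube5_def subset_iff mem_cube by (auto simp: inner_simps)

lemma cube_small:
  assumes "x \<in> cube a h" "x \<in> cube b k" "k \<le> h" "0 < k"
  shows "cube (b - k *\<^sub>R One) (3 * k) \<subseteq> cube5 a h"
  unfolding subset_iff mem_cube cube5_def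
proof (intro allI impI ballI)
  fix t i :: 'a assume H: "\<forall>i\<in>Basis. (b - k *\<^sub>R One) \<bullet> i \<le> t \<bullet> i \<and> t \<bullet> i \<le> (b - k *\<^sub>R One) \<bullet> i + 3 * k" and i: "i \<in> Basis"
  show "(a - (2 * h) *\<^sub>R One) \<bullet> i \<le> t \<bullet> i \<and> t \<bullet> i \<le> (a - (2 * h) *\<^sub>R One) \<bullet> i + 5 * h"
    using H[rule_format, OF i] assms(1,2)[unfolded mem_cube, rule_format, OF i] assms(3,4) i by (simp add: inner_simps)
qed

text \<open>Every cube lies in a cube with corner in a dense set D and rational side, which in turn
  lies in the triple of the original cube; this reduces suprema over cubes to countable ones.\<close>
lemma cube_approx:
  fixes D :: "'a::euclidean_space set"
  assumes D: "\<And>X. open X \<Longrightarrow> X \<noteq> {} \<Longrightarrow> \<exists>d\<in>D. d \<in> X" and k: "k > 0"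
  obtains d k' where "d \<in> D" "k' \<in> \<rat>" "k' > 0" "cube b k \<subseteq> cube d k'"
    "cube d k' \<subseteq> cube (b - k *\<^sub>R One) (3 * k)"
proof -
  have "box (b - (k/2) *\<^sub>R One) b \<noteq> {}" using k by (auto simp: box_eq_empty inner_simps)
  then obtain d where d: "d \<in> D" "d \<in> box (b - (k/2) *\<^sub>R One) b" using D[of "box (b - (k/2) *\<^sub>R One) b"] by auto
  obtain k' where k': "k' \<in> \<rat>" "3 * k / 2 < k'" "k' < 2 * k" using Rats_dense_in_real[of "3*k/2" "2*k"] k by auto
  show ?thesis
  proof (rule that[OF d(1) k'(1)])
    show "k' > 0" using k k' by simp
    have di: "b \<bullet> i - k/2 < d \<bullet> i \<and> d \<bullet> i < b \<bullet> i" if "i \<in> Basis" for i :: 'a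
      using d(2) that by (auto simp: mem_box inner_simps)
    show "cube b k \<subseteq> cube d k'" unfolding subset_iff mem_cube
    proof (intro allI impI ballI)
      fix t i :: 'a assume H: "\<forall>i\<in>Basis. b \<bullet> i \<le> t \<bullet> i \<and> t \<bullet> i \<le> b \<bullet> i + k" and i: "i \<in> Basis"
      show "d \<bullet> i \<le> t \<bullet> i \<and> t \<bullet> i \<le> d \<bullet> i + k'" using H[rule_format, OF i] di[OF i] k' by linarith
    qed
    show "cube d k' \<subseteq> cube (b - k *\<^sub>R One) (3 * k)" unfolding subset_iff mem_cube
    proof (intro allI impI ballI)
      fix t i :: 'a assume H: "\<forall>i\<in>Basis. d \<bullet> i \<le> t \<bullet> i \<and> t \<bullet> i \<le> d \<bullet> i + k'" and i: "i \<in> Basis"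
      show "(b - k *\<^sub>R One) \<bullet> i \<le> t \<bullet> i \<and> t \<bullet> i \<le> (b - k *\<^sub>R One) \<bullet> i + 3 * k"
        using H[rule_format, OF i] di[OF i] k' i by (simp add: inner_simps)
    qed
  qed
qed

definition dense_corners :: "'a::euclidean_space set" where
  "dense_corners = (SOME D. countable D \<and> (\<forall>X. open X \<longrightarrow> X \<noteq> {} \<longrightarrow> (\<exists>d\<in>D. d \<in> X)))"

lemma dense_corners:
  "countable (dense_corners :: 'a::euclidean_space set)"
  "\<And>X. open X \<Longrightarrow> X \<noteq> {} \<Longrightarrow> \<exists>d\<in>(dense_corners :: 'a::euclidean_space set). d \<in> X"
proof -
  have ex: "\<exists>D::'a set. countable D \<and> (\<forall>X. open X \<longrightarrow> X \<noteq> {} \<longrightarrow> (\<exists>d\<in>D. d \<in> X))"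
    using countable_dense_exists by blast
  show "countable (dense_corners :: 'a set)"
    "\<And>X. open X \<Longrightarrow> X \<noteq> {} \<Longrightarrow> \<exists>d\<in>(dense_corners :: 'a set). d \<in> X"
    using someI_ex[OF ex] unfolding dense_corners_def by blast+
qed

definition rational_cubes :: "('a::euclidean_space \<times> real) set" where
  "rational_cubes = dense_corners \<times> {q. q \<in> \<rat> \<and> q > 0}"

lemma countable_rational_cubes: "countable rational_cubes"
  unfolding rational_cubes_def using dense_corners(1) countable_rat
  by (intro countable_SIGMA) (auto intro: countable_subset)

section \<open>Vitali covering for cubes\<close>

lemma cube_in_cball:
  fixes b :: "'a::euclidean_space"
  assumes "k \<ge> 0"
  shows "cube b k \<subseteq> cball (b + (k/2) *\<^sub>R One) (real DIM('a) * k / 2)"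
proof
  fix y assume y: "y \<in> cube b k"
  have "norm (y - (b + (k/2) *\<^sub>R One)) \<le> (\<Sum>i\<in>Basis. \<bar>(y - (b + (k/2) *\<^sub>R One)) \<bullet> i\<bar>)"
    by (rule norm_le_l1)
  also have "\<dots> \<le> (\<Sum>i\<in>(Basis::'a set). k / 2)"
  proof (rule sum_mono)
    fix i :: 'a assume i: "i \<in> Basis"
    have e: "(y - (b + (k/2) *\<^sub>R One)) \<bullet> i = y \<bullet> i - b \<bullet> i - k/2" using i by (simp add: inner_simps)
    show "\<bar>(y - (b + (k/2) *\<^sub>R One)) \<bullet> i\<bar> \<le> k / 2"
      unfolding e abs_le_iff using y[unfolded mem_cube, rule_format, OF i] by linarith
  qed
  also have "\<dots> = real DIM('a) * k / 2" by simp
  finally show "y \<in> cball (b + (k/2) *\<^sub>R One) (real DIM('a) * k / 2)"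
    by (simp add: dist_norm norm_minus_commute)
qed

lemma ball_in_cube:
  fixes c :: "'a::euclidean_space"
  shows "ball c R \<subseteq> cube (c - R *\<^sub>R One) (2 * R)"
proof
  fix y assume y: "y \<in> ball c R"
  have bound: "\<bar>(y - c) \<bullet> i\<bar> \<le> R" if "i \<in> Basis" for i
    using Basis_le_norm[OF that, of "y - c"] y by (simp add: dist_norm norm_minus_commute)
  show "y \<in> cube (c - R *\<^sub>R One) (2 * R)"
    unfolding mem_cube
  proof (intro ballI)
    fix i :: 'a assume i: "i \<in> Basis"
    have e: "(y - c) \<bullet> i = y \<bullet> i - c \<bullet> i" by (simp add: inner_simps)
    show "(c - R *\<^sub>R One) \<bullet> i \<le> y \<bullet> i \<and> y \<bullet> i \<le> (c - R *\<^sub>R One) \<bullet> i + 2 * R"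
      using bound[OF i] i unfolding e abs_le_iff by (simp add: inner_simps)
  qed
qed

text \<open>The cube concentric with cube b k whose side is 5 n k: it contains the ball of five times
  the circumradius of cube b k.\<close>
definition enlarged_cube :: "'a::euclidean_space \<Rightarrow> real \<Rightarrow> 'a set" where
  "enlarged_cube b k = cube (b + (k/2) *\<^sub>R One - (5 * (real DIM('a) * k / 2)) *\<^sub>R One) (5 * real DIM('a) * k)"

lemma ball_in_enlarged_cube:
  "ball (b + (k/2) *\<^sub>R One) (5 * (real DIM('a) * k / 2)) \<subseteq> enlarged_cube (b::'a::euclidean_space) k"
proof -
  have side: "2 * (5 * (real DIM('a) * k / 2)) = 5 * real DIM('a) * k" by simp
  show ?thesis
    using ball_in_cube[of "b + (k/2) *\<^sub>R One" "5 * (real DIM('a) * k / 2)"]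
    by (simp only: enlarged_cube_def side)
qed

lemma cube_sub_enlarged_cube:
  assumes k: "k > 0" shows "cube (b::'a::euclidean_space) k \<subseteq> enlarged_cube b k"
proof -
  have "real DIM('a) * k > 0" using k by simp
  then have "cball (b + (k/2) *\<^sub>R One) (real DIM('a) * k / 2) \<subseteq> ball (b + (k/2) *\<^sub>R One) (5 * (real DIM('a) * k / 2))"
    by (auto simp: subset_iff mem_cball mem_ball)
  then show ?thesis using cube_in_cball[of k b] ball_in_enlarged_cube[of b k] k by auto
qed

lemma cube_vitali:
  fixes K :: "('a::euclidean_space \<times> real) set"
  assumes K: "\<And>j. j \<in> K \<Longrightarrow> 0 < snd j \<and> snd j \<le> Bd"
  obtains C where "countable C" "C \<subseteq> K" "disjoint_family_on (\<lambda>j. cube (fst j) (snd j)) C"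
    "\<And>i. i \<in> K \<Longrightarrow> \<exists>j\<in>C. cube (fst i) (snd i) \<subseteq> enlarged_cube (fst j) (snd j)"
proof -
  define n where "n = real DIM('a)"
  have n: "n \<ge> 1" unfolding n_def using DIM_positive[where 'a='a] by linarith
  define cen where "cen = (\<lambda>j::'a \<times> real. fst j + (snd j / 2) *\<^sub>R One)"
  define rad where "rad = (\<lambda>j::'a \<times> real. n * snd j / 2)"
  have rad: "0 < rad i \<and> rad i \<le> n * Bd / 2" if "i \<in> K" for i
    using K[of i] that n unfolding rad_def by (auto intro!: mult_left_mono)
  obtain C where C: "countable C" "C \<subseteq> K"
    "pairwise (\<lambda>i j. disjnt (cball (cen i) (rad i)) (cball (cen j) (rad j))) C"
    "\<And>i. i \<in> K \<Longrightarrow> \<exists>j. j \<in> C \<and> \<not> disjnt (cball (cen i) (rad i)) (cball (cen j) (rad j)) \<and>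
                        cball (cen i) (rad i) \<subseteq> ball (cen j) (5 * rad j)"
    by (rule Vitali_covering_lemma_cballs_balls[of K rad "n * Bd / 2" cen, OF rad]) blast+
  have in_cball: "cube (fst j) (snd j) \<subseteq> cball (cen j) (rad j)" if "j \<in> K" for j
    using cube_in_cball[of "snd j" "fst j"] K[of j] that unfolding cen_def rad_def n_def by auto
  show ?thesis
  proof (rule that[OF C(1,2)])
    show "disjoint_family_on (\<lambda>j. cube (fst j) (snd j)) C"
      unfolding disjoint_family_on_def
    proof (intro ballI impI)
      fix i j assume ij: "i \<in> C" "j \<in> C" "i \<noteq> j"
      then have "disjnt (cball (cen i) (rad i)) (cball (cen j) (rad j))" using C(3) unfolding pairwise_def by blast
      then show "cube (fst i) (snd i) \<inter> cube (fst j) (snd j) = {}"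
        using in_cball[of i] in_cball[of j] ij C(2) unfolding disjnt_def by blast
    qed
    fix i assume i: "i \<in> K"
    obtain j where j: "j \<in> C" "cball (cen i) (rad i) \<subseteq> ball (cen j) (5 * rad j)" using C(4)[OF i] by auto
    have "cube (fst i) (snd i) \<subseteq> enlarged_cube (fst j) (snd j)"
      using in_cball[OF i] j(2) ball_in_enlarged_cube[of "fst j" "snd j"] unfolding cen_def rad_def n_def by blast
    then show "\<exists>j\<in>C. cube (fst i) (snd i) \<subseteq> enlarged_cube (fst j) (snd j)" using j(1) by blast
  qed
qed

definition nu_meas :: "('a::euclidean_space \<Rightarrow> ennreal) \<Rightarrow> 'a set \<Rightarrow> ennreal" where
  "nu_meas G P = (\<integral>\<^sup>+x. G x * indicator P x \<partial>lebesgue)"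

lemma nu_meas_mono: "A \<subseteq> B \<Longrightarrow> nu_meas G A \<le> nu_meas G B"
  unfolding nu_meas_def by (intro nn_integral_mono) (auto split: split_indicator)

lemma nu_meas_density:
  "G \<in> borel_measurable lebesgue \<Longrightarrow> A \<in> sets lebesgue \<Longrightarrow> nu_meas G A = emeasure (density lebesgue G) A"
  unfolding nu_meas_def by (subst emeasure_density) auto

lemma wmeas_mono: "A \<subseteq> B \<Longrightarrow> wmeas W A \<le> wmeas W B"
  unfolding wmeas_def by (intro nn_integral_mono) (auto split: split_indicator)

lemma nn_integral_count_space_ge:
  fixes f :: "'i \<Rightarrow> ennreal"
  assumes "j \<in> I" shows "f j \<le> (\<integral>\<^sup>+i. f i \<partial>count_space I)"
proof -
  have "f j = (\<integral>\<^sup>+i. f j * indicator {j} i \<partial>count_space I)"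
    using assms by (subst nn_integral_cmult_indicator) auto
  also have "\<dots> \<le> (\<integral>\<^sup>+i. f i \<partial>count_space I)"
    by (intro nn_integral_mono) (auto split: split_indicator)
  finally show ?thesis .
qed

lemma emeasure_UN_le:
  assumes I: "countable I" and X[measurable]: "\<And>i. i \<in> I \<Longrightarrow> X i \<in> sets M"
  shows "emeasure M (\<Union>(X ` I)) \<le> (\<integral>\<^sup>+i. emeasure M (X i) \<partial>count_space I)"
proof -
  have U[measurable]: "\<Union>(X ` I) \<in> sets M" using I X by (intro sets.countable_UN') auto
  have "emeasure M (\<Union>(X ` I)) = (\<integral>\<^sup>+x. indicator (\<Union>(X ` I)) x \<partial>M)" by simp
  also have "\<dots> \<le> (\<integral>\<^sup>+x. \<integral>\<^sup>+i. indicator (X i) x \<partial>count_space I \<partial>M)"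
  proof (intro nn_integral_mono)
    fix x
    show "indicator (\<Union>(X ` I)) x \<le> (\<integral>\<^sup>+i. indicator (X i) x \<partial>count_space I)"
    proof (cases "x \<in> \<Union>(X ` I)")
      case True
      then obtain j where "j \<in> I" "x \<in> X j" by auto
      then show ?thesis using nn_integral_count_space_ge[of j I "\<lambda>i. indicator (X i) x"] True by simp
    qed simp
  qed
  also have "\<dots> = (\<integral>\<^sup>+i. \<integral>\<^sup>+x. indicator (X i) x \<partial>M \<partial>count_space I)"
    using I by (intro nn_integral_count_space_nn_integral) auto
  also have "\<dots> = (\<integral>\<^sup>+i. emeasure M (X i) \<partial>count_space I)"
    by (intro nn_integral_cong) auto
  finally show ?thesis .
qed

section \<open>A_1 weights\<close>

locale A1_weight =
  fixes W :: "'a::euclidean_space \<Rightarrow> real" and C1 :: real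
  assumes Wmeas[measurable]: "W \<in> borel_measurable lebesgue"
    and Wint: "\<And>K. compact K \<Longrightarrow> set_integrable lebesgue K W"
    and Wpos: "AE x in lebesgue. W x > 0"
    and Wnn: "\<And>x. W x \<ge> 0"
    and C1: "C1 > 0"
    and A1_cube: "\<And>a h. h > 0 \<Longrightarrow> AE x in lebesgue. x \<in> cube a h \<longrightarrow>
        wmeas W (cube a h) / ennreal (measure lebesgue (cube a h)) \<le> ennreal C1 * ennreal (W x)"
begin

lemma wmeas_density: "A \<in> sets lebesgue \<Longrightarrow> wmeas W A = emeasure (density lebesgue (\<lambda>x. ennreal (W x))) A"
  unfolding wmeas_def by (subst emeasure_density) auto

definition mu :: "'a set \<Rightarrow> real" where "mu Q = enn2real (wmeas W Q)"

text \<open>Cubes have finite and positive W-measure (local integrability, W > 0 a.e.).\<close>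
lemma wmeas_cube_finite: "wmeas W (cube a h) < \<infinity>"
proof -
  have "set_integrable lebesgue (cube a h) W" using Wint compact_cube by blast
  then have "(\<integral>\<^sup>+x. ennreal (norm (indicator (cube a h) x *\<^sub>R W x)) \<partial>lebesgue) < \<infinity>"
    by (simp add: set_integrable_def integrable_iff_bounded)
  also have "(\<integral>\<^sup>+x. ennreal (norm (indicator (cube a h) x *\<^sub>R W x)) \<partial>lebesgue) = wmeas W (cube a h)"
    unfolding wmeas_def using Wnn by (intro nn_integral_cong) (auto split: split_indicator)
  finally show ?thesis .
qed

lemma wmeas_cube_pos: assumes h: "h > 0" shows "wmeas W (cube a h) > 0"
proof (rule ccontr)
  assume "\<not> wmeas W (cube a h) > 0"
  then have "wmeas W (cube a h) = 0" by simp
  then have "AE x in lebesgue. ennreal (W x) * indicator (cube a h) x = 0"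
    unfolding wmeas_def by (subst (asm) nn_integral_0_iff_AE) auto
  then have "AE x in lebesgue. x \<notin> cube a h"
    using Wpos by eventually_elim (auto split: split_indicator)
  then have "emeasure lebesgue (cube a h) = 0"
    by (subst (asm) AE_iff_measurable[where N="cube a h"]) auto
  then show False using emeasure_cube[of h a] h by simp
qed

lemma mu_cube: assumes "h > 0" shows "wmeas W (cube a h) = ennreal (mu (cube a h))" "mu (cube a h) > 0"
proof -
  show "wmeas W (cube a h) = ennreal (mu (cube a h))"
    using wmeas_cube_finite[of a h] unfolding mu_def by (cases "wmeas W (cube a h)") auto
  then show "mu (cube a h) > 0" using wmeas_cube_pos[OF assms, of a] by simp
qed

lemma mu_mono: "h > 0 \<Longrightarrow> k > 0 \<Longrightarrow> cube b k \<subseteq> cube a h \<Longrightarrow> mu (cube b k) \<le> mu (cube a h)"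
  using wmeas_mono[of "cube b k" "cube a h" W] mu_cube[of h a] mu_cube[of k b] by simp

lemma A1_real:
  assumes h: "h > 0"
  shows "AE x in lebesgue. x \<in> cube a h \<longrightarrow> mu (cube a h) / h ^ DIM('a) \<le> C1 * W x"
  using A1_cube[OF h, of a]
proof eventually_elim
  case (elim x)
  show ?case
  proof
    assume x: "x \<in> cube a h"
    have "ennreal (mu (cube a h) / h ^ DIM('a)) = wmeas W (cube a h) / ennreal (measure lebesgue (cube a h))"
      using h mu_cube[OF h, of a] by (simp add: measure_cube divide_ennreal)
    also have "\<dots> \<le> ennreal (C1 * W x)" using elim x C1 Wnn[of x] by (simp add: ennreal_mult)
    finally show "mu (cube a h) / h ^ DIM('a) \<le> C1 * W x"
      using C1 Wnn[of x] by (simp add: ennreal_le_iff mult_nonneg_nonneg)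
  qed
qed

lemma A1_subset_bound:
  assumes h: "h > 0" and E[measurable]: "E \<in> sets lebesgue" and sub: "E \<subseteq> cube a h"
  shows "ennreal (mu (cube a h) / h ^ DIM('a)) * emeasure lebesgue E \<le> ennreal C1 * wmeas W E"
proof -
  have "ennreal (mu (cube a h) / h ^ DIM('a)) * emeasure lebesgue E
      = (\<integral>\<^sup>+x. ennreal (mu (cube a h) / h ^ DIM('a)) * indicator E x \<partial>lebesgue)"
    by (simp add: nn_integral_cmult_indicator)
  also have "\<dots> \<le> (\<integral>\<^sup>+x. ennreal C1 * (ennreal (W x) * indicator E x) \<partial>lebesgue)"
    using A1_real[OF h, of a]
  proof (intro nn_integral_mono_AE, eventually_elim)
    case (elim x)
    then show ?case using sub C1 Wnn[of x]
      by (auto split: split_indicator simp: ennreal_mult[symmetric] intro!: ennreal_leI)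
  qed
  also have "\<dots> = ennreal C1 * wmeas W E"
    unfolding wmeas_def by (simp add: nn_integral_cmult)
  finally show ?thesis .
qed

lemma doubling_cube:
  assumes h: "h > 0" and k: "k > 0" and sub: "cube b k \<subseteq> cube a h"
  shows "mu (cube a h) * k ^ DIM('a) \<le> C1 * h ^ DIM('a) * mu (cube b k)"
proof -
  have "ennreal (mu (cube a h) / h ^ DIM('a)) * ennreal (k ^ DIM('a)) \<le> ennreal C1 * ennreal (mu (cube b k))"
    using A1_subset_bound[OF h cube_sets sub] emeasure_cube[of k b] k mu_cube(1)[OF k, of b] by simp
  moreover have "0 \<le> mu (cube a h) / h ^ DIM('a)" using mu_cube(2)[OF h, of a] h by simp
  ultimately have "mu (cube a h) / h ^ DIM('a) * k ^ DIM('a) \<le> C1 * mu (cube b k)"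
    using k C1 mu_cube(2)[OF k, of b] by (simp add: ennreal_mult[symmetric] ennreal_le_iff)
  then show ?thesis using h by (simp add: field_simps)
qed

text \<open>The doubling constant for the enlargement used in the Vitali covering.\<close>
definition vitali_const :: real where "vitali_const = C1 * (5 * real DIM('a)) ^ DIM('a)"

lemma vitali_const_pos: "vitali_const > 0"
  unfolding vitali_const_def using C1 by simp

lemma mu_enlarged_cube:
  assumes k: "k > 0"
  shows "wmeas W (enlarged_cube b k) \<le> ennreal (vitali_const * mu (cube b k))"
proof -
  define n where "n = real DIM('a)"
  have side: "5 * n * k > 0" using k by (simp add: n_def)
  have "mu (enlarged_cube b k) * k ^ DIM('a) \<le> C1 * (5 * n * k) ^ DIM('a) * mu (cube b k)"
    using doubling_cube[OF side k] cube_sub_enlarged_cube[OF k, of b] by (simp add: enlarged_cube_def n_def)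
  then have "mu (enlarged_cube b k) \<le> vitali_const * mu (cube b k)"
    using k by (simp add: vitali_const_def n_def power_mult_distrib mult_ac)
  then show ?thesis using mu_cube(1)[OF side] by (simp add: enlarged_cube_def n_def ennreal_leI)
qed

lemma mu_cube5:
  assumes h: "h > 0"
  shows "mu (cube5 a h) \<le> C1 * 5 ^ DIM('a) * mu (cube a h)"
proof -
  have "mu (cube5 a h) * h ^ DIM('a) \<le> C1 * (5 * h) ^ DIM('a) * mu (cube a h)"
    using cube_sub_cube5[OF h, of a] h unfolding cube5_def by (intro doubling_cube) auto
  then show ?thesis using h by (simp add: power_mult_distrib mult_ac)
qed

lemma weak_type:
  fixes G :: "'a \<Rightarrow> ennreal" and J :: "('a \<times> real) set"
  assumes G[measurable]: "G \<in> borel_measurable lebesgue" and S[measurable]: "S \<in> sets lebesgue"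
    and J: "\<And>j. j \<in> J \<Longrightarrow> 0 < snd j \<and> snd j \<le> Bd \<and> cube (fst j) (snd j) \<subseteq> S"
    and t: "t > 0"
    and E: "E \<subseteq> {x. \<exists>j\<in>J. x \<in> cube (fst j) (snd j) \<and> ennreal t * wmeas W (cube (fst j) (snd j)) < nu_meas G (cube (fst j) (snd j))}"
  shows "wmeas W E \<le> ennreal (vitali_const / t) * nu_meas G S"
proof -
  define cb where "cb = (\<lambda>j::'a \<times> real. cube (fst j) (snd j))"
  define K where "K = {j\<in>J. ennreal t * wmeas W (cb j) < nu_meas G (cb j)}"
  obtain C where C: "countable C" "C \<subseteq> K" "disjoint_family_on cb C"
    and cover: "\<And>i. i \<in> K \<Longrightarrow> \<exists>j\<in>C. cb i \<subseteq> enlarged_cube (fst j) (snd j)"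
    using cube_vitali[of K Bd] J unfolding K_def cb_def by auto
  have E_sub: "E \<subseteq> (\<Union>j\<in>C. enlarged_cube (fst j) (snd j))"
    using E cover unfolding K_def cb_def by fastforce
  let ?MU = "density lebesgue (\<lambda>x. ennreal (W x))"
  let ?NU = "density lebesgue G"
  have "wmeas W E \<le> emeasure ?MU (\<Union>j\<in>C. enlarged_cube (fst j) (snd j))"
    using wmeas_mono[OF E_sub] C(1) by (subst wmeas_density[symmetric]) (auto simp: enlarged_cube_def)
  also have "\<dots> \<le> (\<integral>\<^sup>+j. emeasure ?MU (enlarged_cube (fst j) (snd j)) \<partial>count_space C)"
    using C(1) by (intro emeasure_UN_le) (auto simp: enlarged_cube_def)
  also have "\<dots> \<le> (\<integral>\<^sup>+j. ennreal (vitali_const / t) * emeasure ?NU (cb j) \<partial>count_space C)"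
  proof (intro nn_integral_mono)
    fix j assume "j \<in> space (count_space C)"
    then have jK: "j \<in> K" using C(2) by auto
    have k: "snd j > 0" using J[of j] jK unfolding K_def by auto
    have "emeasure ?MU (enlarged_cube (fst j) (snd j)) \<le> ennreal (vitali_const * mu (cb j))"
      using mu_enlarged_cube[OF k] unfolding cb_def by (simp add: wmeas_density enlarged_cube_def)
    also have "\<dots> = ennreal (vitali_const / t) * (ennreal t * wmeas W (cb j))"
      using t vitali_const_pos mu_cube[OF k, of "fst j"] unfolding cb_def
      by (simp add: ennreal_mult[symmetric] mult.assoc[symmetric])
    also have "\<dots> \<le> ennreal (vitali_const / t) * emeasure ?NU (cb j)"
      using jK unfolding K_def by (intro mult_left_mono) (auto simp: cb_def nu_meas_density)
    finally show "emeasure ?MU (enlarged_cube (fst j) (snd j)) \<le> ennreal (vitali_const / t) * emeasure ?NU (cb j)" .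
  qed
  also have "\<dots> = ennreal (vitali_const / t) * emeasure ?NU (\<Union>(cb ` C))"
    using C(1,3) by (subst emeasure_UN_countable) (auto simp: cb_def nn_integral_cmult)
  also have "\<dots> \<le> ennreal (vitali_const / t) * emeasure ?NU S"
    using J C(2) unfolding K_def cb_def by (intro mult_left_mono emeasure_mono) auto
  finally show ?thesis by (simp add: nu_meas_density)
qed

end

section \<open>The estimate for fixed data\<close>

locale fracmax_setting = A1_weight W C1 for W :: "'a::euclidean_space \<Rightarrow> real" and C1 +
  fixes w f :: "'a \<Rightarrow> real" and p r s \<gamma> \<kappa> :: real
  assumes W_eq: "\<And>x. W x = w x powr s"
    and w_meas[measurable]: "w \<in> borel_measurable lebesgue"
    and w_pos: "AE x in lebesgue. w x > 0"
    and f_meas[measurable]: "f \<in> borel_measurable lebesgue"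
    and r_gt_1: "1 < r" and r_less_p: "r < p" and p_less_s: "p < s" and gamma_pos: "\<gamma> > 0"
    and exponent_relation: "1 / s = 1 / p - \<gamma> / real DIM('a)"
    and kappa: "0 < \<kappa>" "\<kappa> < p / s"
begin

definition G :: "'a \<Rightarrow> ennreal" where "G = (\<lambda>y. ennreal (\<bar>f y\<bar> powr p) * ennreal (w y powr p))"

lemma G_meas[measurable]: "G \<in> borel_measurable lebesgue"
  unfolding G_def by measurable

text \<open>The exponents: lam = p/s, the interpolation parameter theta with
  theta + kappa (1 - theta) = lam, and the Kolmogorov exponent kexp = theta / lam;
  dbl3 is the doubling constant for tripling a cube.\<close>
definition lam :: real where "lam = p / s"
definition theta :: real where "theta = (lam - \<kappa>) / (1 - \<kappa>)"
definition kexp :: real where "kexp = theta / lam"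
definition dbl3 :: real where "dbl3 = C1 * 3 ^ DIM('a)"

lemma exponent_facts: "0 < lam" "lam < 1" "0 < \<kappa>" "\<kappa> < 1" "0 < theta" "theta < 1" "0 < kexp" "kexp < 1"
    "theta + \<kappa> * (1 - theta) = lam" "\<kappa> / lam < 1" "dbl3 > 0" "s > 0" "p > 0" "r > 0"
proof -
  show lam: "0 < lam" "lam < 1" using r_less_p r_gt_1 p_less_s by (auto simp: lam_def)
  show k: "0 < \<kappa>" "\<kappa> < 1" using kappa lam by (auto simp: lam_def)
  show "0 < theta" "theta < 1" using kappa lam k by (auto simp: theta_def lam_def field_simps)
  then show "0 < kexp" using lam by (simp add: kexp_def)
  have "lam * \<kappa> < 1 * \<kappa>" using lam k by (intro mult_strict_right_mono) auto
  then have "lam - \<kappa> < lam * (1 - \<kappa>)" by (simp add: algebra_simps)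
  then have "theta < lam" using k by (simp add: theta_def divide_less_eq)
  then show "kexp < 1" using lam by (simp add: kexp_def)
  have "theta * (1 - \<kappa>) = lam - \<kappa>" using k by (simp add: theta_def)
  then show "theta + \<kappa> * (1 - theta) = lam" by (simp add: algebra_simps)
  have "\<kappa> < lam" using kappa by (simp add: lam_def)
  then show "\<kappa> / lam < 1" using lam by (simp add: divide_less_eq)
  show "dbl3 > 0" using C1 by (simp add: dbl3_def)
  show "s > 0" "p > 0" "r > 0" using r_less_p r_gt_1 p_less_s by auto
qed

lemma exponent_sums: "(1 - theta) / lam + kexp = 1 / lam" "\<kappa> * kexp + (1 - kexp) = \<kappa> / lam"
proof -
  note c = exponent_facts
  show "(1 - theta) / lam + kexp = 1 / lam" unfolding kexp_def using c by (simp add: add_divide_distrib[symmetric])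
  have "theta * (1 - \<kappa>) = lam - \<kappa>" using c by (simp add: theta_def)
  then have "kexp * (1 - \<kappa>) = 1 - \<kappa> / lam" using c unfolding kexp_def by (simp add: field_simps)
  then show "\<kappa> * kexp + (1 - kexp) = \<kappa> / lam" by (simp add: algebra_simps)
qed

lemma w_lower_bound:
  assumes k: "k > 0"
  shows "AE y in lebesgue. y \<in> cube b k \<longrightarrow>
    w y > 0 \<and> (mu (cube b k) / (C1 * k ^ DIM('a))) powr (1 / s) \<le> w y"
  using A1_real[OF k, of b] w_pos
proof eventually_elim
  case (elim y)
  show ?case
  proof
    assume y: "y \<in> cube b k"
    have "mu (cube b k) / (C1 * k ^ DIM('a)) \<le> w y powr s"
      using elim y C1 k by (simp add: W_eq field_simps)
    then have "(mu (cube b k) / (C1 * k ^ DIM('a))) powr (1 / s) \<le> (w y powr s) powr (1 / s)"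
      using mu_cube(2)[OF k, of b] C1 k exponent_facts by (intro powr_mono2) auto
    then show "w y > 0 \<and> (mu (cube b k) / (C1 * k ^ DIM('a))) powr (1 / s) \<le> w y"
      using elim exponent_facts by (simp add: powr_powr)
  qed
qed

lemma cube_Lr_bound:
  assumes k: "k > 0" and nu: "nu_meas G (cube b k) = ennreal v" and v: "v \<ge> 0"
  defines "m0 \<equiv> (mu (cube b k) / (C1 * k ^ DIM('a))) powr (1 / s)"
  shows "(\<integral>\<^sup>+ y. ennreal (\<bar>f y\<bar> powr r) * indicator (cube b k) y \<partial>lebesgue)
    \<le> ennreal (m0 powr (- r) * (k ^ DIM('a)) powr (1 - r / p) * v powr (r / p))"
proof -
  note c = exponent_facts
  define P where "P = cube b k"
  have m0: "m0 > 0" using mu_cube(2)[OF k, of b] C1 k by (simp add: m0_def)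
  have AEw: "AE y in lebesgue. y \<in> P \<longrightarrow> w y > 0 \<and> m0 \<le> w y"
    using w_lower_bound[OF k, of b] by (simp add: P_def m0_def)
  define g where "g = (\<lambda>y. \<bar>f y\<bar> * max (w y) 0)"
  have g[measurable]: "g \<in> borel_measurable lebesgue" unfolding g_def by measurable
  have gnn: "g y \<ge> 0" for y unfolding g_def by simp
  have "(\<integral>\<^sup>+ y. ennreal (\<bar>f y\<bar> powr r) * indicator P y \<partial>lebesgue)
      \<le> (\<integral>\<^sup>+ y. ennreal (m0 powr (- r)) * (ennreal (g y powr r) * indicator P y) \<partial>lebesgue)"
    using AEw
  proof (intro nn_integral_mono_AE, eventually_elim)
    case (elim y)
    show ?case
    proof (cases "y \<in> P")
      case True
      then have wy: "w y > 0" "m0 \<le> w y" using elim by auto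
      have "\<bar>f y\<bar> powr r = g y powr r * w y powr (- r)"
        using wy by (simp add: g_def powr_mult powr_minus field_simps)
      also have "\<dots> \<le> g y powr r * m0 powr (- r)"
        using wy m0 c by (intro mult_left_mono powr_mono2') auto
      finally show ?thesis using True m0
        by (simp add: ennreal_mult[symmetric] mult.commute ennreal_leI)
    qed simp
  qed
  also have "\<dots> = ennreal (m0 powr (- r)) * (\<integral>\<^sup>+ y. ennreal (g y powr r) * indicator P y \<partial>lebesgue)"
    by (simp add: nn_integral_cmult P_def)
  also have "(\<integral>\<^sup>+ y. ennreal (g y powr r) * indicator P y \<partial>lebesgue)
      \<le> ennreal ((k ^ DIM('a)) powr (1 - r / p)) * epow (\<integral>\<^sup>+ y. ennreal (g y powr p) * indicator P y \<partial>lebesgue) (r / p)"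
    using power_mean_nn[OF g gnn _ emeasure_cube[of k b] _ _ r_less_p] k c by (simp add: P_def)
  also have "(\<integral>\<^sup>+ y. ennreal (g y powr p) * indicator P y \<partial>lebesgue) = nu_meas G P"
    unfolding nu_meas_def using AEw
    by (intro nn_integral_cong_AE, eventually_elim) (auto simp: g_def G_def powr_mult ennreal_mult split: split_indicator)
  finally show ?thesis
    using nu v by (simp add: P_def epow_ennreal ennreal_mult mult.assoc mult_left_mono)
qed

definition cube_bound :: "real \<Rightarrow> real \<Rightarrow> real" where
  "cube_bound m v = C1 powr (1 / s) * m powr (- 1 / s) * v powr (1 / p)"

lemma cube_bound_nonneg: "cube_bound m v \<ge> 0"
  by (simp add: cube_bound_def)

lemma cube_bound_powr_s:
  assumes "m > 0" "v \<ge> 0"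
  shows "cube_bound m v powr s = C1 * v powr (1 / lam) / m"
proof -
  have "cube_bound m v powr s = (C1 powr (1 / s)) powr s * (m powr (- 1 / s)) powr s * (v powr (1 / p)) powr s"
    using assms C1 by (simp add: cube_bound_def powr_mult)
  also have "\<dots> = C1 * m powr (-1) * v powr (s / p)"
    using assms C1 exponent_facts by (simp add: powr_powr)
  finally show ?thesis using assms by (simp add: lam_def powr_minus_divide)
qed

text \<open>Step (1): the M_{gamma,r}-average of f over a cube P is at most cube_bound mu(P) nu(P);
  the powers of |P| cancel exactly because of the exponent relation.\<close>
lemma cube_est:
  assumes k: "k > 0" and nu: "nu_meas G (cube b k) = ennreal v" and v: "v \<ge> 0"
  shows "epow (ennreal (measure lebesgue (cube b k) powr (\<gamma> * r / real DIM('a) - 1)) *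
           (\<integral>\<^sup>+ y. ennreal (\<bar>f y\<bar> powr r) * indicator (cube b k) y \<partial>lebesgue)) (1 / r)
         \<le> ennreal (cube_bound (mu (cube b k)) v)"
proof -
  note c = exponent_facts
  define L where "L = k ^ DIM('a)"
  define m where "m = mu (cube b k)"
  define n where "n = real DIM('a)"
  define q where "q = \<gamma> * r / n - 1"
  define Z where "Z = ((m / (C1 * L)) powr (1 / s)) powr (- r) * L powr (1 - r / p) * v powr (r / p)"
  have L: "L > 0" using k by (simp add: L_def)
  have m: "m > 0" using mu_cube(2)[OF k] by (simp add: m_def)
  have Z: "Z \<ge> 0" unfolding Z_def by simp
  have I: "(\<integral>\<^sup>+ y. ennreal (\<bar>f y\<bar> powr r) * indicator (cube b k) y \<partial>lebesgue) \<le> ennreal Z"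
    using cube_Lr_bound[OF k nu v] by (simp add: Z_def L_def m_def)
  have m0r: "((m / (C1 * L)) powr (1 / s)) powr (- r) = m powr (- r / s) * C1 powr (r / s) * L powr (r / s)"
    using m C1 L c by (simp add: powr_powr powr_divide powr_mult powr_minus_divide powr_minus field_simps)
  have "r / s = r * (1 / s)" by simp
  also have "\<dots> = r * (1 / p - \<gamma> / n)" using exponent_relation unfolding n_def by simp
  also have "\<dots> = r / p - \<gamma> * r / n" by (simp add: right_diff_distrib)
  finally have Lexp: "q + r / s + (1 - r / p) = 0" unfolding q_def by simp
  have "L powr q * Z = (L powr q * L powr (r / s) * L powr (1 - r / p)) * (C1 powr (r / s) * m powr (- r / s) * v powr (r / p))"
    unfolding Z_def m0r by (simp add: mult_ac)
  also have "L powr q * L powr (r / s) * L powr (1 - r / p) = 1"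
    using L Lexp by (simp only: powr_add[symmetric]) simp
  finally have "(L powr q * Z) powr (1 / r) = cube_bound m v"
    using C1 m v c by (simp add: cube_bound_def powr_mult powr_powr)
  moreover have "ennreal (L powr q) * (\<integral>\<^sup>+ y. ennreal (\<bar>f y\<bar> powr r) * indicator (cube b k) y \<partial>lebesgue)
      \<le> ennreal (L powr q * Z)"
    using mult_left_mono[OF I, of "ennreal (L powr q)"] Z by (simp add: ennreal_mult)
  ultimately show ?thesis
    using epow_mono[of _ "ennreal (L powr q * Z)" "1 / r"] c Z k
    by (simp add: measure_cube L_def q_def n_def m_def epow_ennreal)
qed

text \<open>Step (2): the localised maximal function F of the density of nu with respect to mu,
  over the (countably many) rational cubes inside cube5 a h.\<close>
definition local_cubes :: "'a \<Rightarrow> real \<Rightarrow> ('a \<times> real) set" where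
  "local_cubes a h = {j \<in> rational_cubes. cube (fst j) (snd j) \<subseteq> cube5 a h}"

definition local_max :: "'a \<Rightarrow> real \<Rightarrow> 'a \<Rightarrow> ennreal" where
  "local_max a h x = (SUP j\<in>local_cubes a h.
     (nu_meas G (cube (fst j) (snd j)) / wmeas W (cube (fst j) (snd j))) * indicator (cube (fst j) (snd j)) x)"

lemma local_max_meas[measurable]: "local_max a h \<in> borel_measurable lebesgue"
proof -
  have "countable (local_cubes a h)"
    using countable_rational_cubes by (rule countable_subset[rotated]) (auto simp: local_cubes_def)
  then show ?thesis unfolding local_max_def by measurable
qed

lemma local_cubes_side:
  assumes "j \<in> local_cubes a h"
  shows "0 < snd j \<and> snd j \<le> 5 * h \<and> cube (fst j) (snd j) \<subseteq> cube5 a h"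
  using assms side_le[of "snd j" "fst j"] unfolding local_cubes_def rational_cubes_def cube5_def by auto

lemma local_max_weak_type:
  assumes t: "t > 0"
  shows "wmeas W ({x \<in> space lebesgue. ennreal t < local_max a h x} \<inter> cube a h)
    \<le> ennreal (vitali_const / t) * nu_meas G (cube5 a h)"
proof (rule weak_type[OF G_meas _ local_cubes_side t])
  show "cube5 a h \<in> sets lebesgue" by (simp add: cube5_def)
  show "{x \<in> space lebesgue. ennreal t < local_max a h x} \<inter> cube a h \<subseteq> {x. \<exists>j\<in>local_cubes a h.
      x \<in> cube (fst j) (snd j) \<and> ennreal t * wmeas W (cube (fst j) (snd j)) < nu_meas G (cube (fst j) (snd j))}"
  proof
    fix x assume "x \<in> {x \<in> space lebesgue. ennreal t < local_max a h x} \<inter> cube a h"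
    then obtain j where j: "j \<in> local_cubes a h" and lt: "ennreal t < nu_meas G (cube (fst j) (snd j))
        / wmeas W (cube (fst j) (snd j)) * indicator (cube (fst j) (snd j)) x"
      unfolding local_max_def by (auto simp: less_SUP_iff)
    have xj: "x \<in> cube (fst j) (snd j)" using lt by (cases "x \<in> cube (fst j) (snd j)") auto
    have kj: "snd j > 0" using local_cubes_side[OF j] by simp
    have "ennreal t * ennreal (mu (cube (fst j) (snd j))) < nu_meas G (cube (fst j) (snd j))"
      using lt xj mu_cube[OF kj, of "fst j"] t by (intro less_div_ennreal) auto
    then show "x \<in> {x. \<exists>j\<in>local_cubes a h. x \<in> cube (fst j) (snd j)
        \<and> ennreal t * wmeas W (cube (fst j) (snd j)) < nu_meas G (cube (fst j) (snd j))}"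
      using j xj mu_cube(1)[OF kj, of "fst j"] by auto
  qed
qed

lemma local_max_integral:
  assumes h: "h > 0" and vs: "nu_meas G (cube5 a h) = ennreal vs" "vs \<ge> 0"
  shows "(\<integral>\<^sup>+ y. epow (local_max a h y) kexp * indicator (cube a h) y \<partial>density lebesgue (\<lambda>x. ennreal (W x)))
    \<le> ennreal (kolmogorov_const kexp * (vitali_const * vs) powr kexp * mu (cube a h) powr (1 - kexp))"
proof (rule kolmogorov)
  fix t :: real assume t: "t > 0"
  have "emeasure (density lebesgue (\<lambda>x. ennreal (W x))) ({x \<in> space (density lebesgue (\<lambda>x. ennreal (W x))).
      ennreal t < local_max a h x} \<inter> cube a h) = wmeas W ({x \<in> space lebesgue. ennreal t < local_max a h x} \<inter> cube a h)"
    by (simp add: wmeas_density)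
  also have "\<dots> \<le> ennreal (vitali_const * vs / t)"
    using local_max_weak_type[OF t, of a h] vs vitali_const_pos t by (simp add: ennreal_mult[symmetric])
  finally show "emeasure (density lebesgue (\<lambda>x. ennreal (W x))) ({x \<in> space (density lebesgue (\<lambda>x. ennreal (W x))).
      ennreal t < local_max a h x} \<inter> cube a h) \<le> ennreal (vitali_const * vs / t)" .
qed (use exponent_facts mu_cube[OF h, of a] vs vitali_const_pos in \<open>auto simp: wmeas_density\<close>)

definition final_const :: real where
  "final_const = C1 * dbl3 powr kexp * kolmogorov_const kexp * (vitali_const * (C1 * 5 ^ DIM('a)) powr \<kappa>) powr kexp
     + C1 * dbl3 powr (1 - \<kappa> / lam)"

lemma final_const_pos: "final_const > 0"
proof -
  have "C1 * dbl3 powr kexp * kolmogorov_const kexp * (vitali_const * (C1 * 5 ^ DIM('a)) powr \<kappa>) powr kexp \<ge> 0"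
    using C1 kolmogorov_const_nonneg[of kexp] exponent_facts by simp
  moreover have "C1 * dbl3 powr (1 - \<kappa> / lam) > 0" using C1 exponent_facts by simp
  ultimately show ?thesis unfolding final_const_def by linarith
qed

lemma morrey_condition:
  assumes R: "morrey_norm p \<kappa> (\<lambda>x. w x powr p) W (\<lambda>x. ennreal \<bar>f x\<bar>) = ennreal R0" and R0: "R0 \<ge> 0"
    and k: "k > 0"
  shows "nu_meas G (cube b k) \<le> ennreal (R0 powr p * mu (cube b k) powr \<kappa>)"
proof -
  define m where "m = mu (cube b k)"
  have m: "m > 0" "wmeas W (cube b k) = ennreal m" using mu_cube[OF k, of b] by (auto simp: m_def)
  have mk: "m powr \<kappa> > 0" using m by simp
  have eq: "(\<integral>\<^sup>+ y. epow (ennreal \<bar>f y\<bar>) p * ennreal (w y powr p) * indicator (cube b k) y \<partial>lebesgue) = nu_meas G (cube b k)"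
    unfolding nu_meas_def G_def by (simp add: epow_ennreal)
  have "epow (nu_meas G (cube b k) / epow (wmeas W (cube b k)) \<kappa>) (1 / p) \<le> ennreal R0"
    unfolding R[symmetric] morrey_norm_def eq[symmetric]
    by (rule SUP_upper) (auto simp: is_cube_iff intro!: exI[of _ b] exI[of _ k] k)
  then have le: "epow (nu_meas G (cube b k) / ennreal (m powr \<kappa>)) (1 / p) \<le> ennreal R0"
    using m by (simp add: epow_ennreal)
  show ?thesis
  proof (cases "nu_meas G (cube b k)")
    case top
    then show ?thesis using le mk by (simp add: ennreal_top_divide epow_def top_unique)
  next
    case (real v)
    then have "(v / m powr \<kappa>) powr (1 / p) \<le> R0"
      using le mk R0 by (simp add: divide_ennreal epow_ennreal ennreal_le_iff)
    then have "((v / m powr \<kappa>) powr (1 / p)) powr p \<le> R0 powr p"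
      using exponent_facts by (intro powr_mono2) auto
    then have "v / m powr \<kappa> \<le> R0 powr p" using real mk exponent_facts by (simp add: powr_powr)
    then show ?thesis using real mk by (simp add: m_def field_simps)
  qed
qed

end

locale fracmax_morrey = fracmax_setting +
  fixes N :: real
  assumes N_nonneg: "N \<ge> 0"
    and morrey: "\<And>b k. k > 0 \<Longrightarrow> nu_meas G (cube b k) \<le> ennreal (N * mu (cube b k) powr \<kappa>)"
begin

lemma nu_cube_real:
  assumes k: "k > 0"
  obtains v where "nu_meas G (cube b k) = ennreal v" "v \<ge> 0" "v \<le> N * mu (cube b k) powr \<kappa>"
proof -
  have le: "nu_meas G (cube b k) \<le> ennreal (N * mu (cube b k) powr \<kappa>)" by (rule morrey[OF k])
  then obtain v where v: "nu_meas G (cube b k) = ennreal v" "v \<ge> 0"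
    by (cases "nu_meas G (cube b k)") (auto simp: top_unique)
  moreover have "v \<le> N * mu (cube b k) powr \<kappa>" using le v N_nonneg by (simp add: ennreal_le_iff)
  ultimately show ?thesis by (rule that)
qed

definition coef_small :: real where "coef_small = C1 * dbl3 powr kexp * N powr ((1 - theta) / lam)"
definition coef_large :: "real \<Rightarrow> real" where
  "coef_large mq = C1 * N powr (1 / lam) * (mq / dbl3) powr (\<kappa> / lam - 1)"

lemma coef_nonneg: "coef_small \<ge> 0" "coef_large mq \<ge> 0"
  unfolding coef_small_def coef_large_def using C1 by simp_all

lemma mu_triple:
  assumes k: "k > 0"
  shows "mu (cube (b - k *\<^sub>R One) (3 * k)) \<le> dbl3 * mu (cube b k)"
proof -
  have "mu (cube (b - k *\<^sub>R One) (3 * k)) * k ^ DIM('a) \<le> C1 * (3 * k) ^ DIM('a) * mu (cube b k)"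
    using k by (intro doubling_cube cube_sub3) auto
  then have "mu (cube (b - k *\<^sub>R One) (3 * k)) * k ^ DIM('a) \<le> (dbl3 * mu (cube b k)) * k ^ DIM('a)"
    by (simp add: dbl3_def power_mult_distrib mult_ac)
  then show ?thesis using k by simp
qed

text \<open>Cubes larger than Q: the Morrey condition alone, since mu(P) >= mu(Q) / dbl3 and the
  exponent kappa/lam - 1 is negative.\<close>
lemma pointwise_large:
  assumes h: "h > 0" and x: "x \<in> cube a h" and xP: "x \<in> cube b k" and k: "k > 0" and hk: "h < k"
    and nu: "nu_meas G (cube b k) = ennreal v" "v \<ge> 0"
  shows "C1 * v powr (1 / lam) / mu (cube b k) \<le> coef_large (mu (cube a h))"
proof -
  note c = exponent_facts
  define m where "m = mu (cube b k)"
  have m: "m > 0" using mu_cube(2)[OF k] by (simp add: m_def)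
  have vN: "v \<le> N * m powr \<kappa>" using morrey[OF k, of b] nu N_nonneg by (simp add: m_def ennreal_le_iff)
  have "mu (cube a h) \<le> mu (cube (b - k *\<^sub>R One) (3 * k))"
    using h k cube_tail[OF x xP hk] by (intro mu_mono) auto
  then have mq: "mu (cube a h) / dbl3 \<le> m" using mu_triple[OF k, of b] c by (simp add: m_def field_simps)
  have mq0: "mu (cube a h) / dbl3 > 0" using mu_cube(2)[OF h] c by simp
  have "v powr (1 / lam) \<le> (N * m powr \<kappa>) powr (1 / lam)" using vN nu c by (intro powr_mono2) auto
  also have "\<dots> = N powr (1 / lam) * m powr (\<kappa> / lam)" using N_nonneg m by (simp add: powr_mult powr_powr)
  finally have "C1 * v powr (1 / lam) / m \<le> C1 * (N powr (1 / lam) * m powr (\<kappa> / lam)) / m"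
    using C1 m by (intro divide_right_mono mult_left_mono) auto
  also have "\<dots> = C1 * N powr (1 / lam) * m powr (\<kappa> / lam - 1)"
    using m by (simp add: powr_diff)
  also have "\<dots> \<le> coef_large (mu (cube a h))"
    unfolding coef_large_def using C1 mq mq0 c by (intro mult_left_mono powr_mono2') auto
  finally show ?thesis unfolding m_def .
qed

text \<open>Interpolation between v <= dbl3 y m (maximal function) and v <= N m^kappa (Morrey),
  with weights theta and 1 - theta.\<close>
lemma interpolation:
  assumes m: "m > 0" and y: "y \<ge> 0" and v: "v \<ge> 0"
    and vy: "v \<le> dbl3 * y * m" and vN: "v \<le> N * m powr \<kappa>"
  shows "C1 * v powr (1 / lam) / m \<le> coef_small * y powr kexp"
proof -
  note c = exponent_facts
  have "v powr (1 / lam) = v powr (theta / lam) * v powr ((1 - theta) / lam)"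
    by (simp add: powr_add[symmetric] diff_divide_distrib add_divide_distrib[symmetric])
  also have "\<dots> \<le> (dbl3 * y * m) powr (theta / lam) * (N * m powr \<kappa>) powr ((1 - theta) / lam)"
    using vy vN v c by (intro mult_mono powr_mono2) auto
  also have "\<dots> = dbl3 powr kexp * y powr kexp * N powr ((1 - theta) / lam)
      * (m powr (theta / lam) * m powr (\<kappa> * ((1 - theta) / lam)))"
  proof -
    have "(dbl3 * y * m) powr (theta / lam) = dbl3 powr kexp * y powr kexp * m powr (theta / lam)"
      using c m y by (simp add: powr_mult kexp_def)
    moreover have "(N * m powr \<kappa>) powr ((1 - theta) / lam) = N powr ((1 - theta) / lam) * m powr (\<kappa> * ((1 - theta) / lam))"
      using m N_nonneg by (simp add: powr_mult powr_powr)
    ultimately show ?thesis by (simp add: mult_ac)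
  qed
  also have "m powr (theta / lam) * m powr (\<kappa> * ((1 - theta) / lam)) = m powr ((theta + \<kappa> * (1 - theta)) / lam)"
    by (simp add: powr_add[symmetric] add_divide_distrib)
  also have "\<dots> = m" using c m by simp
  finally have "C1 * v powr (1 / lam) / m \<le> C1 * (dbl3 powr kexp * y powr kexp * N powr ((1 - theta) / lam) * m) / m"
    using C1 m by (intro divide_right_mono mult_left_mono) auto
  also have "\<dots> = coef_small * y powr kexp" using m by (simp add: coef_small_def)
  finally show ?thesis .
qed

text \<open>Cubes not larger than Q: approximate P from outside by a rational cube inside cube5 a h,
  whose nu/mu-ratio is bounded by F(x), and interpolate.\<close>
lemma pointwise_small:
  assumes h: "h > 0" and x: "x \<in> cube a h" and xP: "x \<in> cube b k" and k: "k > 0" and kh: "k \<le> h"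
    and F: "local_max a h x = ennreal y" "y \<ge> 0"
    and nu: "nu_meas G (cube b k) = ennreal v" "v \<ge> 0"
  shows "C1 * v powr (1 / lam) / mu (cube b k) \<le> coef_small * y powr kexp"
proof -
  define m where "m = mu (cube b k)"
  have m: "m > 0" using mu_cube(2)[OF k] by (simp add: m_def)
  obtain d k' where dk: "d \<in> dense_corners" "k' \<in> \<rat>" "k' > 0" "cube b k \<subseteq> cube d k'"
      "cube d k' \<subseteq> cube (b - k *\<^sub>R One) (3 * k)"
    using cube_approx[OF dense_corners(2) k, of b] by metis
  have j: "(d, k') \<in> local_cubes a h"
    using dk cube_small[OF x xP kh k] unfolding local_cubes_def rational_cubes_def by auto
  define m' where "m' = mu (cube d k')"
  have m': "m' > 0" "m' \<le> dbl3 * m"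
    using mu_cube(2)[OF dk(3)] mu_mono[OF _ dk(3) dk(5)] mu_triple[OF k, of b] k
    by (auto simp: m'_def m_def)
  obtain v' where v': "nu_meas G (cube d k') = ennreal v'" "v' \<ge> 0"
    using nu_cube_real[OF dk(3)] by metis
  have "ennreal (v' / m') = nu_meas G (cube d k') / wmeas W (cube d k') * indicator (cube d k') x"
    using v' m' xP dk(4) mu_cube(1)[OF dk(3)] by (auto simp: divide_ennreal m'_def)
  also have "\<dots> \<le> local_max a h x" unfolding local_max_def by (rule SUP_upper2[OF j]) simp
  finally have "v' \<le> y * m'" using F m' by (simp add: ennreal_le_iff field_simps)
  moreover have "v \<le> v'" using nu_meas_mono[OF dk(4), of G] nu v' by (simp add: ennreal_le_iff)
  moreover have "y * m' \<le> y * (dbl3 * m)" using m'(2) F(2) by (rule mult_left_mono)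
  ultimately have "v \<le> dbl3 * y * m" by (simp add: mult_ac)
  moreover have "v \<le> N * m powr \<kappa>" using morrey[OF k, of b] nu N_nonneg by (simp add: m_def ennreal_le_iff)
  ultimately show ?thesis using interpolation[OF m F(2) nu(2)] by (simp add: m_def)
qed

lemma pointwise_power_bound:
  assumes h: "h > 0" and x: "x \<in> cube a h" and xP: "x \<in> cube b k" and k: "k > 0"
    and F: "local_max a h x = ennreal y" "y \<ge> 0"
    and nu: "nu_meas G (cube b k) = ennreal v" "v \<ge> 0"
  shows "cube_bound (mu (cube b k)) v powr s \<le> coef_small * y powr kexp + coef_large (mu (cube a h))"
proof (cases "h < k")
  case True
  then show ?thesis using pointwise_large[OF h x xP k True nu] cube_bound_powr_s[OF mu_cube(2)[OF k] nu(2)]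
      coef_nonneg(1) F(2) by (simp add: add_increasing)
next
  case False
  then show ?thesis using pointwise_small[OF h x xP k _ F nu] cube_bound_powr_s[OF mu_cube(2)[OF k] nu(2)]
      coef_nonneg(2) by (simp add: add_increasing2)
qed

lemma pointwise_cube:
  assumes h: "h > 0" and x: "x \<in> cube a h" and xP: "x \<in> cube b k" and k: "k > 0"
  shows "epow (ennreal (measure lebesgue (cube b k) powr (\<gamma> * r / real DIM('a) - 1)) *
           (\<integral>\<^sup>+ y. ennreal (\<bar>f y\<bar> powr r) * indicator (cube b k) y \<partial>lebesgue)) (1 / r)
    \<le> epow (ennreal coef_small * epow (local_max a h x) kexp + ennreal (coef_large (mu (cube a h)))) (1 / s)"
    (is "?avg \<le> epow ?B (1 / s)")
proof -
  note c = exponent_facts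
  obtain v where v: "nu_meas G (cube b k) = ennreal v" "v \<ge> 0" "v \<le> N * mu (cube b k) powr \<kappa>"
    using nu_cube_real[OF k] by metis
  define V where "V = cube_bound (mu (cube b k)) v"
  have "?avg \<le> ennreal V" unfolding V_def by (rule cube_est[OF k v(1,2)])
  also have "ennreal V \<le> epow ?B (1 / s)"
  proof (cases "local_max a h x")
    case (real y)
    have "V powr s \<le> coef_small * y powr kexp + coef_large (mu (cube a h))"
      unfolding V_def using real by (intro pointwise_power_bound[OF h x xP k _ _ v(1,2)]) auto
    then have "(V powr s) powr (1 / s) \<le> (coef_small * y powr kexp + coef_large (mu (cube a h))) powr (1 / s)"
      using c by (intro powr_mono2) (auto simp: V_def cube_bound_nonneg)
    then have V: "V \<le> (coef_small * y powr kexp + coef_large (mu (cube a h))) powr (1 / s)"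
      using c by (simp add: V_def cube_bound_nonneg powr_powr)
    have B: "?B = ennreal (coef_small * y powr kexp + coef_large (mu (cube a h)))"
    proof -
      have "?B = ennreal (coef_small * y powr kexp) + ennreal (coef_large (mu (cube a h)))"
        using real coef_nonneg by (simp add: epow_ennreal ennreal_mult)
      also have "\<dots> = ennreal (coef_small * y powr kexp + coef_large (mu (cube a h)))"
        using coef_nonneg by (intro ennreal_plus[symmetric]) auto
      finally show ?thesis .
    qed
    have "0 \<le> coef_small * y powr kexp + coef_large (mu (cube a h))"
      using coef_nonneg by simp
    then show ?thesis unfolding B using V by (simp add: epow_ennreal ennreal_leI)
  next
    case top
    show ?thesis
    proof (cases "N = 0")
      case True
      then show ?thesis using v by (simp add: V_def cube_bound_def)
    next
      case False
      then have "coef_small > 0" unfolding coef_small_def using C1 c N_nonneg by simp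
      then show ?thesis using top by (simp add: ennreal_mult_top epow_def)
    qed
  qed
  finally show ?thesis .
qed

lemma frac_bound:
  assumes h: "h > 0" and x: "x \<in> cube a h"
  shows "epow (frac_max \<gamma> r f x) s
    \<le> ennreal coef_small * epow (local_max a h x) kexp + ennreal (coef_large (mu (cube a h)))"
proof -
  define B where "B = ennreal coef_small * epow (local_max a h x) kexp + ennreal (coef_large (mu (cube a h)))"
  have "frac_max \<gamma> r f x \<le> epow B (1 / s)"
    unfolding frac_max_def B_def
    by (rule SUP_least) (auto simp: is_cube_iff intro: pointwise_cube[OF h x])
  then have "epow (frac_max \<gamma> r f x) s \<le> epow (epow B (1 / s)) s"
    using exponent_facts by (intro epow_mono) auto
  also have "\<dots> = B" using exponent_facts by (simp add: epow_epow)
  finally show ?thesis unfolding B_def .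
qed

lemma final_arith:
  assumes mq: "mq > 0" and vs: "vs \<ge> 0" "vs \<le> N * mstar powr \<kappa>"
    and ms: "mstar > 0" "mstar \<le> C1 * 5 ^ DIM('a) * mq"
  shows "coef_small * (kolmogorov_const kexp * (vitali_const * vs) powr kexp * mq powr (1 - kexp))
      + coef_large mq * mq \<le> final_const * N powr (1 / lam) * mq powr (\<kappa> / lam)"
proof -
  note c = exponent_facts
  define D where "D = vitali_const * (C1 * 5 ^ DIM('a)) powr \<kappa>"
  have "mstar powr \<kappa> \<le> (C1 * 5 ^ DIM('a) * mq) powr \<kappa>" using ms c by (intro powr_mono2) auto
  then have "vs \<le> N * (C1 * 5 ^ DIM('a) * mq) powr \<kappa>" using vs N_nonneg by (meson mult_left_mono order_trans)
  then have "(vitali_const * vs) powr kexp \<le> (vitali_const * (N * (C1 * 5 ^ DIM('a) * mq) powr \<kappa>)) powr kexp"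
    using vitali_const_pos vs c by (intro powr_mono2) auto
  also have "\<dots> = D powr kexp * N powr kexp * mq powr (\<kappa> * kexp)"
    using vitali_const_pos N_nonneg mq C1 by (simp add: D_def powr_mult powr_powr mult_ac)
  finally have "coef_small * (kolmogorov_const kexp * (vitali_const * vs) powr kexp * mq powr (1 - kexp))
      \<le> coef_small * (kolmogorov_const kexp * (D powr kexp * N powr kexp * mq powr (\<kappa> * kexp)) * mq powr (1 - kexp))"
    using coef_nonneg kolmogorov_const_nonneg[of kexp] c by (intro mult_left_mono mult_right_mono) auto
  also have "\<dots> = C1 * dbl3 powr kexp * kolmogorov_const kexp * D powr kexp
       * (N powr ((1 - theta) / lam) * N powr kexp) * (mq powr (\<kappa> * kexp) * mq powr (1 - kexp))"
    unfolding coef_small_def by (simp add: mult_ac)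
  also have "\<dots> = C1 * dbl3 powr kexp * kolmogorov_const kexp * D powr kexp * N powr (1 / lam) * mq powr (\<kappa> / lam)"
    using exponent_sums by (simp add: powr_add[symmetric])
  finally have small: "coef_small * (kolmogorov_const kexp * (vitali_const * vs) powr kexp * mq powr (1 - kexp))
      \<le> C1 * dbl3 powr kexp * kolmogorov_const kexp * D powr kexp * N powr (1 / lam) * mq powr (\<kappa> / lam)" .
  have i: "dbl3 powr (1 - \<kappa> / lam) = 1 / dbl3 powr (\<kappa> / lam - 1)"
    by (subst powr_minus_divide[symmetric]) simp
  have "(mq / dbl3) powr (\<kappa> / lam - 1) = mq powr (\<kappa> / lam - 1) * dbl3 powr (1 - \<kappa> / lam)"
    using mq c unfolding i by (simp add: powr_divide)
  then have "(mq / dbl3) powr (\<kappa> / lam - 1) * mq = dbl3 powr (1 - \<kappa> / lam) * (mq powr (\<kappa> / lam - 1) * mq powr 1)"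
    using mq by (simp add: mult_ac)
  also have "mq powr (\<kappa> / lam - 1) * mq powr 1 = mq powr (\<kappa> / lam)"
    by (simp only: powr_add[symmetric]) simp
  finally have "(mq / dbl3) powr (\<kappa> / lam - 1) * mq = dbl3 powr (1 - \<kappa> / lam) * mq powr (\<kappa> / lam)" .
  then have "coef_large mq * mq = C1 * dbl3 powr (1 - \<kappa> / lam) * N powr (1 / lam) * mq powr (\<kappa> / lam)"
    unfolding coef_large_def by (simp add: mult_ac)
  with small show ?thesis unfolding final_const_def D_def by (simp add: algebra_simps)
qed

lemma frac_max_integral_split:
  assumes h: "h > 0"
  shows "(\<integral>\<^sup>+ y. epow (frac_max \<gamma> r f y) s * ennreal (W y) * indicator (cube a h) y \<partial>lebesgue)
    \<le> ennreal coef_small * (\<integral>\<^sup>+ y. epow (local_max a h y) kexp * indicator (cube a h) y \<partial>density lebesgue (\<lambda>x. ennreal (W x)))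
      + ennreal (coef_large (mu (cube a h))) * ennreal (mu (cube a h))"
proof -
  define Q where "Q = cube a h"
  define mq where "mq = mu Q"
  let ?MU = "density lebesgue (\<lambda>x. ennreal (W x))"
  have "(\<integral>\<^sup>+ y. epow (frac_max \<gamma> r f y) s * ennreal (W y) * indicator Q y \<partial>lebesgue)
      \<le> (\<integral>\<^sup>+ y. ennreal (W y) * (ennreal coef_small * (epow (local_max a h y) kexp * indicator Q y)
          + ennreal (coef_large mq) * indicator Q y) \<partial>lebesgue)"
  proof (intro nn_integral_mono)
    fix y
    show "epow (frac_max \<gamma> r f y) s * ennreal (W y) * indicator Q y \<le> ennreal (W y) * (ennreal coef_small
        * (epow (local_max a h y) kexp * indicator Q y) + ennreal (coef_large mq) * indicator Q y)"
    proof (cases "y \<in> Q")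
      case True
      have "epow (frac_max \<gamma> r f y) s * ennreal (W y)
          \<le> (ennreal coef_small * epow (local_max a h y) kexp + ennreal (coef_large mq)) * ennreal (W y)"
        using frac_bound[OF h True[unfolded Q_def]] unfolding mq_def Q_def by (rule mult_right_mono) simp
      then show ?thesis using True by (simp add: mult_ac)
    qed simp
  qed
  also have "\<dots> = (\<integral>\<^sup>+ y. ennreal coef_small * (epow (local_max a h y) kexp * indicator Q y)
      + ennreal (coef_large mq) * indicator Q y \<partial>?MU)"
    by (subst nn_integral_density) (auto simp: Q_def)
  also have "\<dots> = ennreal coef_small * (\<integral>\<^sup>+ y. epow (local_max a h y) kexp * indicator Q y \<partial>?MU)
      + ennreal (coef_large mq) * emeasure ?MU Q"
    by (subst nn_integral_add) (auto simp: Q_def nn_integral_cmult)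
  also have "emeasure ?MU Q = ennreal mq"
    using mu_cube(1)[OF h, of a] by (simp add: Q_def mq_def wmeas_density)
  finally show ?thesis unfolding Q_def mq_def .
qed

text \<open>Step (4): the weighted integral of M f^s over Q is O(N^(1/lam) mu(Q)^(kappa/lam)), by
  Kolmogorov's inequality for F and the Morrey condition on cube5 a h.\<close>
lemma cube_integral:
  assumes h: "h > 0"
  shows "(\<integral>\<^sup>+ y. epow (frac_max \<gamma> r f y) s * ennreal (W y) * indicator (cube a h) y \<partial>lebesgue)
     \<le> ennreal (final_const * N powr (1 / lam) * mu (cube a h) powr (\<kappa> / lam))"
proof -
  define mq where "mq = mu (cube a h)"
  have mq: "mq > 0" using mu_cube(2)[OF h] by (simp add: mq_def)
  have h5: "5 * h > 0" using h by simp
  obtain vs where vs: "nu_meas G (cube5 a h) = ennreal vs" "vs \<ge> 0" "vs \<le> N * mu (cube5 a h) powr \<kappa>"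
    using nu_cube_real[OF h5] unfolding cube5_def by metis
  have "(\<integral>\<^sup>+ y. epow (frac_max \<gamma> r f y) s * ennreal (W y) * indicator (cube a h) y \<partial>lebesgue)
      \<le> ennreal coef_small * ennreal (kolmogorov_const kexp * (vitali_const * vs) powr kexp * mq powr (1 - kexp))
        + ennreal (coef_large mq) * ennreal mq"
    using order_trans[OF frac_max_integral_split[OF h, of a] add_right_mono[OF mult_left_mono[OF local_max_integral[OF h vs(1,2)]]]]
    by (simp add: mq_def)
  also have "\<dots> = ennreal (coef_small * (kolmogorov_const kexp * (vitali_const * vs) powr kexp * mq powr (1 - kexp))
         + coef_large mq * mq)"
    using coef_nonneg kolmogorov_const_nonneg[of kexp] exponent_facts mq
    by (simp add: ennreal_mult'[symmetric] ennreal_plus[symmetric] del: ennreal_plus)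
  also have "\<dots> \<le> ennreal (final_const * N powr (1 / lam) * mq powr (\<kappa> / lam))"
    using mu_cube(2)[OF h5, of "a - (2 * h) *\<^sub>R One"] mu_cube5[OF h, of a]
    by (intro ennreal_leI final_arith[OF mq vs(2,3)]) (simp_all add: cube5_def mq_def)
  finally show ?thesis unfolding mq_def .
qed

end

context fracmax_setting
begin

lemma main_estimate:
  "morrey_norm s (\<kappa> * s / p) W W (frac_max \<gamma> r f)
     \<le> ennreal (final_const powr (1 / s)) * morrey_norm p \<kappa> (\<lambda>x. w x powr p) W (\<lambda>x. ennreal \<bar>f x\<bar>)"
proof (cases "morrey_norm p \<kappa> (\<lambda>x. w x powr p) W (\<lambda>x. ennreal \<bar>f x\<bar>)")
  case top
  then show ?thesis using final_const_pos by (simp add: ennreal_mult_top)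
next
  case (real R0)
  note c = exponent_facts
  have morrey: "\<And>b k. 0 < k \<Longrightarrow> nu_meas G (cube b k) \<le> ennreal (R0 powr p * mu (cube b k) powr \<kappa>)"
    by (rule morrey_condition[OF real(2) real(1)])
  interpret fracmax_morrey W C1 w f p r s \<gamma> \<kappa> "R0 powr p"
    by (rule fracmax_morrey.intro[OF fracmax_setting_axioms fracmax_morrey_axioms.intro]) (simp_all add: morrey)
  have "morrey_norm s (\<kappa> * s / p) W W (frac_max \<gamma> r f) \<le> ennreal (final_const powr (1 / s) * R0)"
    unfolding morrey_norm_def
  proof (rule SUP_least)
    fix Q :: "'a set" assume "Q \<in> {Q. is_cube Q}"
    then obtain a h where h: "h > 0" and Q: "Q = cube a h" by (auto simp: is_cube_iff)
    define m where "m = mu Q"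
    have m: "m > 0" "wmeas W Q = ennreal m" using mu_cube[OF h, of a] by (auto simp: m_def Q)
    have den: "epow (wmeas W Q) (\<kappa> * s / p) = ennreal (m powr (\<kappa> / lam))"
      using m by (simp add: epow_ennreal lam_def)
    have "(\<integral>\<^sup>+ y. epow (frac_max \<gamma> r f y) s * ennreal (W y) * indicator Q y \<partial>lebesgue)
        \<le> ennreal (final_const * (R0 powr p) powr (1 / lam) * m powr (\<kappa> / lam))"
      unfolding Q m_def by (rule cube_integral[OF h])
    then have "(\<integral>\<^sup>+ y. epow (frac_max \<gamma> r f y) s * ennreal (W y) * indicator Q y \<partial>lebesgue) / epow (wmeas W Q) (\<kappa> * s / p)
        \<le> ennreal (final_const * (R0 powr p) powr (1 / lam) * m powr (\<kappa> / lam)) / ennreal (m powr (\<kappa> / lam))"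
      unfolding den by (rule divide_right_mono_ennreal)
    also have "\<dots> = ennreal (final_const * (R0 powr p) powr (1 / lam))"
      using m final_const_pos by (simp add: divide_ennreal)
    also have "\<dots> = epow (ennreal (final_const powr (1 / s) * R0)) s"
      using final_const_pos real c by (simp add: epow_ennreal powr_mult powr_powr lam_def)
    finally have "epow ((\<integral>\<^sup>+ y. epow (frac_max \<gamma> r f y) s * ennreal (W y) * indicator Q y \<partial>lebesgue)
        / epow (wmeas W Q) (\<kappa> * s / p)) (1 / s) \<le> epow (epow (ennreal (final_const powr (1 / s) * R0)) s) (1 / s)"
      using c by (intro epow_mono) auto
    then show "epow ((\<integral>\<^sup>+ y. epow (frac_max \<gamma> r f y) s * ennreal (W y) * indicator Q y \<partial>lebesgue)
        / epow (wmeas W Q) (\<kappa> * s / p)) (1 / s) \<le> ennreal (final_const powr (1 / s) * R0)"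
      using c by (simp only: epow_epow_inv)
  qed
  then show ?thesis using real final_const_pos by (simp add: ennreal_mult)
qed

end

lemma A1_weight_of_A1:
  assumes "A1 W" and "\<And>x. W x \<ge> 0"
  obtains C1 where "A1_weight W C1"
proof -
  obtain C0 where C0: "\<And>Q. is_cube Q \<Longrightarrow> AE x in lebesgue. x \<in> Q \<longrightarrow>
      wmeas W Q / ennreal (measure lebesgue Q) \<le> ennreal C0 * ennreal (W x)"
    using assms(1) unfolding A1_def by blast
  have "A1_weight W (max C0 1)"
  proof
    show "W \<in> borel_measurable lebesgue" "\<And>K. compact K \<Longrightarrow> set_integrable lebesgue K W"
      "AE x in lebesgue. W x > 0" using assms(1) unfolding A1_def weight_def by auto
    fix a :: 'a and h :: real assume h: "h > 0"
    then have "is_cube (cube a h)" by (auto simp: is_cube_iff)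
    from C0[OF this] show "AE x in lebesgue. x \<in> cube a h \<longrightarrow>
        wmeas W (cube a h) / ennreal (measure lebesgue (cube a h)) \<le> ennreal (max C0 1) * ennreal (W x)"
    proof eventually_elim
      case (elim x)
      have "ennreal C0 * ennreal (W x) \<le> ennreal (max C0 1) * ennreal (W x)"
        by (intro mult_right_mono ennreal_leI) auto
      then show ?case using elim by (blast intro: order_trans)
    qed
  qed (use assms(2) in auto)
  then show ?thesis by (rule that)
qed

lemma target_exponent_gt:
  fixes p s \<gamma> n :: real
  assumes "\<gamma> > 0" "n > 0" "1 < p" "p < n / \<gamma>" "1 / s = 1 / p - \<gamma> / n"
  shows "p < s"
proof -
  have "\<gamma> / n < 1 / p" using assms(1-4) by (simp add: field_simps)
  then have "0 < 1 / s" "1 / s < 1 / p" using assms by auto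
  then show ?thesis using assms(3) by (simp add: field_simps zero_less_divide_iff)
qed

text \<open>For each f the fixed-data locale applies; the constant final_const^(1/s) depends only on
  n, the A_1 constant C1 and p, s, kappa, not on f.\<close>
theorem lemma4p1:
  fixes \<alpha> \<beta> p s \<kappa> r :: real and w :: "'a::euclidean_space \<Rightarrow> real"
  assumes "\<alpha> > 0" "\<beta> > 0" "\<alpha> + \<beta> < real DIM('a)"
    and "1 < p" "p < real DIM('a) / (\<alpha> + \<beta>)"
    and "1 / s = 1 / p - (\<alpha> + \<beta>) / real DIM('a)"
    and "weight w" "A1 (\<lambda>x. w x powr s)"
    and "0 < \<kappa>" "\<kappa> < p / s"
    and "1 < r" "r < p"
  shows "\<exists>C::real. \<forall>f::'a \<Rightarrow> real. f \<in> borel_measurable lebesgue \<longrightarrow>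
     morrey_norm s (\<kappa> * s / p) (\<lambda>x. w x powr s) (\<lambda>x. w x powr s) (frac_max (\<alpha> + \<beta>) r f)
       \<le> ennreal C * morrey_norm p \<kappa> (\<lambda>x. w x powr p) (\<lambda>x. w x powr s) (\<lambda>x. ennreal \<bar>f x\<bar>)"
proof -
  have "p < s" using target_exponent_gt[of "\<alpha> + \<beta>" "real DIM('a)" p s] assms(1,2,4-6) by simp
  obtain C1 where A: "A1_weight (\<lambda>x. w x powr s) C1" using A1_weight_of_A1[OF assms(8)] by auto
  show ?thesis
  proof (intro exI allI impI)
    fix f :: "'a \<Rightarrow> real" assume f: "f \<in> borel_measurable lebesgue"
    interpret fracmax_setting "\<lambda>x. w x powr s" C1 w f p r s "\<alpha> + \<beta>" \<kappa>
      using A assms f \<open>p < s\<close> by (intro fracmax_setting.intro fracmax_setting_axioms.intro) (auto simp: weight_def)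
    show "morrey_norm s (\<kappa> * s / p) (\<lambda>x. w x powr s) (\<lambda>x. w x powr s) (frac_max (\<alpha> + \<beta>) r f)
       \<le> ennreal (final_const powr (1 / s)) * morrey_norm p \<kappa> (\<lambda>x. w x powr p) (\<lambda>x. w x powr s) (\<lambda>x. ennreal \<bar>f x\<bar>)"
      by (rule main_estimate)
  qed
qed

end
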